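(* Let $M$ be a proper $(4,4)$-map with only finitely many non-flat faces and vertices. Then the $1$-skeleton of $M$ (with its path metric) is quasi-isometric to the $1$-skeleton of a proper planar map in which every face has degree $4$ and only finitely many vertices are non-flat (have degree different from $4$).
   Context: A proper map is a tessellation of $\mathbb R^2$ by a 2-complex whose support is the whole plane and such that every disc meets only finitely many cells. Degree of a face: length of its boundary path; degree of a vertex: number of oriented edges starting there. It is a $(4,4)$-map if every face and every vertex has degree $\ge4$; a face or vertex is flat if its degree is exactly $4$, non-flat otherwise. Two metric spaces are quasi-isometric if there is a map $\phi$ between them with image coarsely dense and $-K+\frac1Ld(x,y)<d(\phi x,\phi y)<K+Ld(x,y)$ for some constants $L>1,K>0$. *)

theory Defs
  imports Complex_Main
begin

text \<open>Planar maps are encoded combinatorially as rotation systems (combinatorial maps):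
  a set of darts (oriented edges) D, a fixed-point-free involution alpha on D
  (reversal of orientation) and a permutation sigma of D (cyclic order of the darts
  leaving a vertex).  Vertices are sigma-orbits, faces are orbits of
  phi = sigma o alpha (the boundary walk of a face).\<close>

definition is_cmap :: "'d set \<Rightarrow> ('d \<Rightarrow> 'd) \<Rightarrow> ('d \<Rightarrow> 'd) \<Rightarrow> bool" where
  "is_cmap D \<alpha> \<sigma> \<longleftrightarrow> (\<forall>d\<in>D. \<alpha> d \<in> D \<and> \<alpha> (\<alpha> d) = d \<and> \<alpha> d \<noteq> d) \<and> bij_betw \<sigma> D D"

definition vorb :: "('d \<Rightarrow> 'd) \<Rightarrow> 'd \<Rightarrow> 'd set" where
  "vorb \<sigma> d = {(\<sigma> ^^ n) d | n. True}"

definition fphi :: "('d \<Rightarrow> 'd) \<Rightarrow> ('d \<Rightarrow> 'd) \<Rightarrow> 'd \<Rightarrow> 'd" where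
  "fphi \<alpha> \<sigma> = \<sigma> \<circ> \<alpha>"

definition forb :: "('d \<Rightarrow> 'd) \<Rightarrow> ('d \<Rightarrow> 'd) \<Rightarrow> 'd \<Rightarrow> 'd set" where
  "forb \<alpha> \<sigma> d = {(fphi \<alpha> \<sigma> ^^ n) d | n. True}"

definition vdeg :: "('d \<Rightarrow> 'd) \<Rightarrow> 'd \<Rightarrow> nat" where
  "vdeg \<sigma> d = card (vorb \<sigma> d)"

definition fdeg :: "('d \<Rightarrow> 'd) \<Rightarrow> ('d \<Rightarrow> 'd) \<Rightarrow> 'd \<Rightarrow> nat" where
  "fdeg \<alpha> \<sigma> d = card (forb \<alpha> \<sigma> d)"

definition verts :: "'d set \<Rightarrow> ('d \<Rightarrow> 'd) \<Rightarrow> 'd set set" where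
  "verts D \<sigma> = vorb \<sigma> ` D"

fun is_walk :: "'d set \<Rightarrow> ('d \<Rightarrow> 'd) \<Rightarrow> ('d \<Rightarrow> 'd) \<Rightarrow> 'd set \<Rightarrow> 'd list \<Rightarrow> 'd set \<Rightarrow> bool" where
  "is_walk D \<alpha> \<sigma> u [] v \<longleftrightarrow> u = v"
| "is_walk D \<alpha> \<sigma> u (d # ds) v \<longleftrightarrow> d \<in> D \<and> vorb \<sigma> d = u \<and> is_walk D \<alpha> \<sigma> (vorb \<sigma> (\<alpha> d)) ds v"

definition facewalk :: "('d \<Rightarrow> 'd) \<Rightarrow> ('d \<Rightarrow> 'd) \<Rightarrow> 'd \<Rightarrow> 'd list" where
  "facewalk \<alpha> \<sigma> d = map (\<lambda>i. (fphi \<alpha> \<sigma> ^^ i) d) [0..<fdeg \<alpha> \<sigma> d]"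

definition hstep :: "'d set \<Rightarrow> ('d \<Rightarrow> 'd) \<Rightarrow> ('d \<Rightarrow> 'd) \<Rightarrow> 'd list \<Rightarrow> 'd list \<Rightarrow> bool" where
  "hstep D \<alpha> \<sigma> w w' \<longleftrightarrow> (\<exists>xs ys d. d \<in> D \<and> w = xs @ ys \<and>
      (w' = xs @ [d, \<alpha> d] @ ys \<or> w' = xs @ facewalk \<alpha> \<sigma> d @ ys))"

definition homot_rel :: "'d set \<Rightarrow> ('d \<Rightarrow> 'd) \<Rightarrow> ('d \<Rightarrow> 'd) \<Rightarrow> 'd set \<Rightarrow> ('d list \<times> 'd list) set" where
  "homot_rel D \<alpha> \<sigma> u = {(w, w'). is_walk D \<alpha> \<sigma> u w u \<and> is_walk D \<alpha> \<sigma> u w' u \<and>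
      (hstep D \<alpha> \<sigma> w w' \<or> hstep D \<alpha> \<sigma> w' w)}"

definition simply_connected_map :: "'d set \<Rightarrow> ('d \<Rightarrow> 'd) \<Rightarrow> ('d \<Rightarrow> 'd) \<Rightarrow> bool" where
  "simply_connected_map D \<alpha> \<sigma> \<longleftrightarrow>
     (\<forall>u\<in>verts D \<sigma>. \<forall>w. is_walk D \<alpha> \<sigma> u w u \<longrightarrow> (w, []) \<in> (homot_rel D \<alpha> \<sigma> u)\<^sup>*)"

definition connected_map :: "'d set \<Rightarrow> ('d \<Rightarrow> 'd) \<Rightarrow> ('d \<Rightarrow> 'd) \<Rightarrow> bool" where
  "connected_map D \<alpha> \<sigma> \<longleftrightarrow> (\<forall>u\<in>verts D \<sigma>. \<forall>v\<in>verts D \<sigma>. \<exists>w. is_walk D \<alpha> \<sigma> u w v)"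

text \<open>proper map = locally finite tessellation of the plane: a connected, simply connected,
  infinite, locally finite combinatorial map (its realisation is a non-compact simply
  connected surface, i.e. homeomorphic to R^2)\<close>
definition proper_map :: "'d set \<Rightarrow> ('d \<Rightarrow> 'd) \<Rightarrow> ('d \<Rightarrow> 'd) \<Rightarrow> bool" where
  "proper_map D \<alpha> \<sigma> \<longleftrightarrow> is_cmap D \<alpha> \<sigma> \<and> infinite D \<and>
     (\<forall>d\<in>D. finite (vorb \<sigma> d) \<and> finite (forb \<alpha> \<sigma> d)) \<and>
     connected_map D \<alpha> \<sigma> \<and> simply_connected_map D \<alpha> \<sigma>"

definition four_four_map :: "'d set \<Rightarrow> ('d \<Rightarrow> 'd) \<Rightarrow> ('d \<Rightarrow> 'd) \<Rightarrow> bool" where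
  "four_four_map D \<alpha> \<sigma> \<longleftrightarrow> (\<forall>d\<in>D. vdeg \<sigma> d \<ge> 4 \<and> fdeg \<alpha> \<sigma> d \<ge> 4)"

definition nonflat_vertices :: "'d set \<Rightarrow> ('d \<Rightarrow> 'd) \<Rightarrow> 'd set set" where
  "nonflat_vertices D \<sigma> = {vorb \<sigma> d | d. d \<in> D \<and> vdeg \<sigma> d \<noteq> 4}"

definition nonflat_faces :: "'d set \<Rightarrow> ('d \<Rightarrow> 'd) \<Rightarrow> ('d \<Rightarrow> 'd) \<Rightarrow> 'd set set" where
  "nonflat_faces D \<alpha> \<sigma> = {forb \<alpha> \<sigma> d | d. d \<in> D \<and> fdeg \<alpha> \<sigma> d \<noteq> 4}"

definition gdist :: "'d set \<Rightarrow> ('d \<Rightarrow> 'd) \<Rightarrow> ('d \<Rightarrow> 'd) \<Rightarrow> 'd set \<Rightarrow> 'd set \<Rightarrow> real" where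
  "gdist D \<alpha> \<sigma> u v = real (LEAST n. \<exists>w. is_walk D \<alpha> \<sigma> u w v \<and> length w = n)"

definition quasi_isometric :: "'a set \<Rightarrow> ('a \<Rightarrow> 'a \<Rightarrow> real) \<Rightarrow> 'b set \<Rightarrow> ('b \<Rightarrow> 'b \<Rightarrow> real) \<Rightarrow> bool" where
  "quasi_isometric X dX Y dY \<longleftrightarrow> (\<exists>\<phi> L K C. \<phi> ` X \<subseteq> Y \<and> L > 1 \<and> K > 0 \<and>
     (\<forall>x\<in>X. \<forall>y\<in>X. - K + dX x y / L < dY (\<phi> x) (\<phi> y) \<and> dY (\<phi> x) (\<phi> y) < K + L * dX x y) \<and>
     (\<forall>z\<in>Y. \<exists>x\<in>X. dY z (\<phi> x) \<le> C))"

end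

(*
  Subdivide M: add a vertex at the midpoint of every edge and at the centre of every face, and join
  each face centre to the midpoints of the edges on its boundary.  Every corner of M becomes a
  quadrilateral face.  Midpoints have degree 4, original vertices keep their degree and a face
  centre gets the degree of its face, so only finitely many vertices of the subdivision are
  non-flat.  Since only finitely many faces are non-flat, face degrees are bounded by some F.
  A path of length n in M becomes a path of length 2n through the midpoints; conversely, moving
  both ends of an edge of the subdivision to nearby original vertices, the edge is replaced by a
  path of length at most F along a face boundary.  Together with the fact that every vertex is
  within distance 2 of an original vertex, this gives the quasi-isometry.  Carried out up to
  homotopy, the same replacement turns a closed walk of the subdivision into a subdivided closed
  walk of M, which is null-homotopic because M is simply connected; hence the subdivision is a
  proper map.  Its countably many darts are finally relabelled by natural numbers.
*)
theory Submission
  imports Defs "HOL-Library.Countable_Set"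
begin

section \<open>Orbits of a bijection\<close>

lemma funpow_bij_betw_in: "bij_betw f S S \<Longrightarrow> x \<in> S \<Longrightarrow> (f ^^ n) x \<in> S"
  using bij_betw_funpow bij_betwE by blast

lemma funpow_split:
  assumes "i \<le> j"
  shows "(f ^^ j) x = (f ^^ i) ((f ^^ (j - i)) x)"
proof -
  have "j = i + (j - i)" using assms by simp
  then show ?thesis by (metis funpow_add comp_apply)
qed

lemma finite_orbit_periodic:
  assumes f: "bij_betw f S S" and d: "d \<in> S" and fin: "finite {(f ^^ n) d |n. True}"
  obtains p where "p > 0" "(f ^^ p) d = d"
proof -
  have "\<not> inj (\<lambda>n. (f ^^ n) d)"
  proof
    assume "inj (\<lambda>n. (f ^^ n) d)"
    moreover have "range (\<lambda>n. (f ^^ n) d) = {(f ^^ n) d |n. True}" by auto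
    ultimately have "finite (UNIV :: nat set)" using fin finite_imageD by metis
    then show False by simp
  qed
  then obtain i j where "i < j" "(f ^^ i) d = (f ^^ j) d"
    unfolding inj_def by (metis linorder_neqE_nat)
  moreover have "(f ^^ j) d = (f ^^ i) ((f ^^ (j - i)) d)"
    using \<open>i < j\<close> by (simp add: funpow_split)
  ultimately have ij: "i < j" "(f ^^ i) d = (f ^^ i) ((f ^^ (j - i)) d)" by simp_all
  have "inj_on (f ^^ i) S" using bij_betw_funpow[OF f] bij_betw_imp_inj_on by blast
  then have "d = (f ^^ (j - i)) d" using ij(2) d funpow_bij_betw_in[OF f d] by (meson inj_onD)
  then show ?thesis using that[of "j - i"] ij(1) by simp
qed

lemma orbit_eq_of_mem:
  assumes "p > 0" "(f ^^ p) d = d" and x: "x \<in> {(f ^^ n) d |n. True}"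
  shows "{(f ^^ n) x |n. True} = {(f ^^ n) d |n. True}"
proof (intro equalityI subsetI)
  obtain m where m: "x = (f ^^ m) d" using x by blast
  fix y
  assume "y \<in> {(f ^^ n) x |n. True}"
  then obtain n where "y = (f ^^ n) ((f ^^ m) d)" using m by blast
  then have "y = (f ^^ (n + m)) d" by (simp add: funpow_add)
  then show "y \<in> {(f ^^ n) d |n. True}" by blast
next
  obtain m where m: "x = (f ^^ m) d" using x by blast
  fix y
  assume "y \<in> {(f ^^ n) d |n. True}"
  then obtain n where y: "y = (f ^^ n) d" by blast
  have "n + m * (p - 1) + m = n + m * p"
    using \<open>p > 0\<close> by (cases p) auto
  then have "(n + m * (p - 1) + m) mod p = n mod p" by (simp only: mod_mult_self1)
  then have "(f ^^ (n + m * (p - 1) + m)) d = y"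
    using funpow_mod_eq[OF assms(2)] y by metis
  then have "(f ^^ (n + m * (p - 1))) x = y" using m by (simp add: funpow_add)
  then show "y \<in> {(f ^^ n) x |n. True}" by blast
qed

lemma finite_orbit_card:
  assumes f: "bij_betw f S S" and d: "d \<in> S" and fin: "finite {(f ^^ n) d |n. True}"
  shows "(f ^^ card {(f ^^ n) d |n. True}) d = d"
    and "{(f ^^ n) d |n. True} = {(f ^^ k) d |k. k < card {(f ^^ n) d |n. True}}"
    and "card {(f ^^ n) d |n. True} > 0"
proof -
  define p where "p = (LEAST p. p > 0 \<and> (f ^^ p) d = d)"
  obtain q where "q > 0" "(f ^^ q) d = d" using finite_orbit_periodic[OF assms] .
  then have p: "p > 0" "(f ^^ p) d = d"
    unfolding p_def by (metis (mono_tags, lifting) LeastI)+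
  have p_least: "(f ^^ q) d \<noteq> d" if "0 < q" "q < p" for q
    using that unfolding p_def using not_less_Least by blast
  have orbit: "{(f ^^ n) d |n. True} = (\<lambda>k. (f ^^ k) d) ` {..<p}"
  proof (intro equalityI subsetI)
    fix x assume "x \<in> {(f ^^ n) d |n. True}"
    then obtain n where "x = (f ^^ n) d" by blast
    then have "x = (f ^^ (n mod p)) d" using funpow_mod_eq[OF p(2)] by simp
    then show "x \<in> (\<lambda>k. (f ^^ k) d) ` {..<p}" using p(1) by auto
  qed auto
  have "inj_on (\<lambda>k. (f ^^ k) d) {..<p}"
  proof (rule linorder_inj_onI')
    fix i j assume ij: "i \<in> {..<p}" "j \<in> {..<p}" "i < j"
    have "inj_on (f ^^ i) S" using bij_betw_funpow[OF f] bij_betw_imp_inj_on by blast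
    moreover have "(f ^^ j) d = (f ^^ i) ((f ^^ (j - i)) d)"
      using ij(3) by (simp add: funpow_split)
    ultimately have "(f ^^ i) d = (f ^^ j) d \<Longrightarrow> (f ^^ (j - i)) d = d"
      using d funpow_bij_betw_in[OF f d] by (metis inj_onD)
    then show "(f ^^ i) d \<noteq> (f ^^ j) d" using p_least[of "j - i"] ij by auto
  qed
  then have card: "card {(f ^^ n) d |n. True} = p"
    using orbit by (simp add: card_image)
  show "(f ^^ card {(f ^^ n) d |n. True}) d = d" "card {(f ^^ n) d |n. True} > 0"
    using card p by simp_all
  show "{(f ^^ n) d |n. True} = {(f ^^ k) d |k. k < card {(f ^^ n) d |n. True}}"
    using orbit card by auto
qed

lemma funpow_right_inverse:
  assumes g: "\<forall>x\<in>S. g x \<in> S \<and> f (g x) = x" and x: "x \<in> S"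
  shows "(f ^^ n) ((g ^^ n) x) = x"
proof (induction n)
  case (Suc n)
  have "(g ^^ n) x \<in> S" using g x by (induction n) auto
  have "(f ^^ Suc n) ((g ^^ Suc n) x) = (f ^^ n) (f (g ((g ^^ n) x)))"
    by (simp add: funpow_swap1)
  then show ?case using Suc g \<open>(g ^^ n) x \<in> S\<close> by simp
qed simp

lemma orbit_right_inverse_subset:
  assumes f: "bij_betw f S S" and g: "\<forall>x\<in>S. g x \<in> S \<and> f (g x) = x"
    and d: "d \<in> S" and p: "p > 0" "(f ^^ p) d = d"
  shows "{(g ^^ n) d |n. True} \<subseteq> {(f ^^ n) d |n. True}"
proof
  fix y assume "y \<in> {(g ^^ n) d |n. True}"
  then obtain n where y: "y = (g ^^ n) d" by blast
  have "y \<in> S" unfolding y using g d by (induction n) auto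
  have fy: "(f ^^ n) y = d" unfolding y by (rule funpow_right_inverse[OF g d])
  have "((f ^^ p) ^^ n) d = d" using p(2) by (induction n) auto
  then have "(f ^^ (p * n)) d = d" by (simp add: funpow_mult)
  then have "(f ^^ n) ((f ^^ (p * n)) y) = (f ^^ n) y"
    using fy by (metis add.commute funpow_add comp_apply)
  moreover have "inj_on (f ^^ n) S" using bij_betw_funpow[OF f] bij_betw_imp_inj_on by blast
  ultimately have "(f ^^ (p * n)) y = y"
    using \<open>y \<in> S\<close> funpow_bij_betw_in[OF f \<open>y \<in> S\<close>] by (metis inj_onD)
  moreover have "p * n = n * (p - 1) + n" using p(1) by (cases p) auto
  ultimately have "y = (f ^^ (n * (p - 1))) d" using fy by (metis funpow_add comp_apply)
  then show "y \<in> {(f ^^ n) d |n. True}" by blast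
qed

lemma orbit_inv_into:
  assumes f: "bij_betw f S S" and d: "d \<in> S" and fin: "finite {(f ^^ n) d |n. True}"
  shows "{(inv_into S f ^^ n) d |n. True} = {(f ^^ n) d |n. True}"
proof
  let ?g = "inv_into S f"
  have g: "\<forall>x\<in>S. ?g x \<in> S \<and> f (?g x) = x"
    using f by (metis bij_betw_def f_inv_into_f inv_into_into)
  have f_left: "\<forall>x\<in>S. f x \<in> S \<and> ?g (f x) = x"
    using f by (metis bij_betwE bij_betw_inv_into_left)
  obtain p where p: "p > 0" "(f ^^ p) d = d" using finite_orbit_periodic[OF assms] .
  show "{(?g ^^ n) d |n. True} \<subseteq> {(f ^^ n) d |n. True}"
    by (rule orbit_right_inverse_subset[OF f g d p])
  have "(?g ^^ p) d = d" using funpow_right_inverse[OF f_left d, of p] p(2) by simp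
  then show "{(f ^^ n) d |n. True} \<subseteq> {(?g ^^ n) d |n. True}"
    by (rule orbit_right_inverse_subset[OF bij_betw_inv_into[OF f] f_left d p(1)])
qed

lemma orbit_4cycle:
  assumes "f a = b" "f b = c" "f c = e" "f e = a" and x: "x \<in> {a, b, c, e}"
  shows "{(f ^^ n) x |n. True} = {a, b, c, e}"
proof -
  have start: "{(f ^^ n) a |n. True} = {a, b, c, e}" if "f a = b" "f b = c" "f c = e" "f e = a"
    for a b c e
  proof
    have "(f ^^ n) a \<in> {a, b, c, e}" for n
      by (induction n) (use that in auto)
    then show "{(f ^^ n) a |n. True} \<subseteq> {a, b, c, e}" by blast
    have "a = (f ^^ 0) a" "b = (f ^^ 1) a" "c = (f ^^ 2) a" "e = (f ^^ 3) a"
      using that by (simp_all add: numeral_eq_Suc)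
    then show "{a, b, c, e} \<subseteq> {(f ^^ n) a |n. True}" by blast
  qed
  from x consider "x = a" | "x = b" | "x = c" | "x = e" by blast
  then show ?thesis
    using start[OF assms(1-4)] start[OF assms(2-4,1)] start[OF assms(3,4,1,2)] start[OF assms(4,1-3)]
    by cases (simp_all add: insert_commute)
qed

lemma vorb_self: "d \<in> vorb \<sigma> d"
  unfolding vorb_def by (metis (mono_tags) CollectI funpow_0)

lemma vorb_sigma_mem: "\<sigma> d \<in> vorb \<sigma> d"
proof -
  have "\<sigma> d = (\<sigma> ^^ Suc 0) d" by simp
  then show ?thesis unfolding vorb_def by blast
qed

lemma forb_phi_pow_mem: "(fphi \<alpha> \<sigma> ^^ n) d \<in> forb \<alpha> \<sigma> d"
  unfolding forb_def by blast

section \<open>Walks and their homotopy\<close>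

lemma is_walk_append_iff:
  "is_walk D \<alpha> \<sigma> u (xs @ ys) v \<longleftrightarrow> (\<exists>m. is_walk D \<alpha> \<sigma> u xs m \<and> is_walk D \<alpha> \<sigma> m ys v)"
  by (induction xs arbitrary: u) auto

lemma is_walk_append:
  "is_walk D \<alpha> \<sigma> u xs m \<Longrightarrow> is_walk D \<alpha> \<sigma> m ys v \<Longrightarrow> is_walk D \<alpha> \<sigma> u (xs @ ys) v"
  using is_walk_append_iff by blast

lemma is_walk_darts: "is_walk D \<alpha> \<sigma> u w v \<Longrightarrow> set w \<subseteq> D"
  by (induction w arbitrary: u) auto

lemma is_walk_target_unique: "is_walk D \<alpha> \<sigma> u w v \<Longrightarrow> is_walk D \<alpha> \<sigma> u w v' \<Longrightarrow> v = v'"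
  by (induction w arbitrary: u) auto

definition rev_walk :: "('d \<Rightarrow> 'd) \<Rightarrow> 'd list \<Rightarrow> 'd list" where
  "rev_walk \<alpha> w = rev (map \<alpha> w)"

lemma rev_walk_simps [simp]:
  "rev_walk \<alpha> [] = []"
  "rev_walk \<alpha> (d # w) = rev_walk \<alpha> w @ [\<alpha> d]"
  "rev_walk \<alpha> (xs @ ys) = rev_walk \<alpha> ys @ rev_walk \<alpha> xs"
  by (simp_all add: rev_walk_def)

definition walk_homot_rel ::
    "'d set \<Rightarrow> ('d \<Rightarrow> 'd) \<Rightarrow> ('d \<Rightarrow> 'd) \<Rightarrow> 'd set \<Rightarrow> 'd set \<Rightarrow> ('d list \<times> 'd list) set" where
  "walk_homot_rel D \<alpha> \<sigma> u v = {(w, w'). is_walk D \<alpha> \<sigma> u w v \<and> is_walk D \<alpha> \<sigma> u w' v \<and>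
      (hstep D \<alpha> \<sigma> w w' \<or> hstep D \<alpha> \<sigma> w' w)}"

definition homotopic ::
    "'d set \<Rightarrow> ('d \<Rightarrow> 'd) \<Rightarrow> ('d \<Rightarrow> 'd) \<Rightarrow> 'd set \<Rightarrow> 'd set \<Rightarrow> 'd list \<Rightarrow> 'd list \<Rightarrow> bool" where
  "homotopic D \<alpha> \<sigma> u v w w' \<longleftrightarrow> (w, w') \<in> (walk_homot_rel D \<alpha> \<sigma> u v)\<^sup>*"

lemma simply_connected_map_iff:
  "simply_connected_map D \<alpha> \<sigma> \<longleftrightarrow>
     (\<forall>u\<in>verts D \<sigma>. \<forall>w. is_walk D \<alpha> \<sigma> u w u \<longrightarrow> homotopic D \<alpha> \<sigma> u u w [])"
  unfolding simply_connected_map_def homotopic_def homot_rel_def walk_homot_rel_def by simp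

lemma homotopic_refl [simp]: "homotopic D \<alpha> \<sigma> u v w w"
  by (simp add: homotopic_def)

lemma homotopic_trans [trans]:
  "homotopic D \<alpha> \<sigma> u v x y \<Longrightarrow> homotopic D \<alpha> \<sigma> u v y z \<Longrightarrow> homotopic D \<alpha> \<sigma> u v x z"
  unfolding homotopic_def by simp

lemma homotopic_sym: "homotopic D \<alpha> \<sigma> u v x y \<Longrightarrow> homotopic D \<alpha> \<sigma> u v y x"
proof -
  have "sym (walk_homot_rel D \<alpha> \<sigma> u v)"
    unfolding walk_homot_rel_def sym_def by auto
  then show "homotopic D \<alpha> \<sigma> u v x y \<Longrightarrow> homotopic D \<alpha> \<sigma> u v y x"
    unfolding homotopic_def by (metis rtrancl_converseI sym_conv_converse_eq rtrancl_converse)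
qed

lemma homotopic_is_walk:
  assumes "homotopic D \<alpha> \<sigma> u v x y" "is_walk D \<alpha> \<sigma> u x v"
  shows "is_walk D \<alpha> \<sigma> u y v"
  using assms unfolding homotopic_def
  by (induction rule: rtrancl_induct) (auto simp: walk_homot_rel_def)

lemma homotopic_stepI:
  assumes "is_walk D \<alpha> \<sigma> u w v" "is_walk D \<alpha> \<sigma> u w' v" "hstep D \<alpha> \<sigma> w w'"
  shows "homotopic D \<alpha> \<sigma> u v w w'"
  using assms unfolding homotopic_def walk_homot_rel_def by auto

lemma hstep_in_context: "hstep D \<alpha> \<sigma> x y \<Longrightarrow> hstep D \<alpha> \<sigma> (p @ x @ q) (p @ y @ q)"
  unfolding hstep_def by (metis append.assoc)

lemma homotopic_in_context:
  assumes "homotopic D \<alpha> \<sigma> u v x y" "is_walk D \<alpha> \<sigma> a p u" "is_walk D \<alpha> \<sigma> v q b"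
  shows "homotopic D \<alpha> \<sigma> a b (p @ x @ q) (p @ y @ q)"
  using assms(1) unfolding homotopic_def
proof (induction rule: rtrancl_induct)
  case (step y z)
  have "hstep D \<alpha> \<sigma> (p @ y @ q) (p @ z @ q) \<or> hstep D \<alpha> \<sigma> (p @ z @ q) (p @ y @ q)"
    using step.hyps(2) hstep_in_context unfolding walk_homot_rel_def by blast
  then have "(p @ y @ q, p @ z @ q) \<in> walk_homot_rel D \<alpha> \<sigma> a b"
    using step.hyps(2) assms(2,3) unfolding walk_homot_rel_def by (auto intro!: is_walk_append)
  with step.IH show ?case by simp
qed simp

lemma homotopic_prepend:
  assumes "homotopic D \<alpha> \<sigma> m v x y" "is_walk D \<alpha> \<sigma> u p m"
  shows "homotopic D \<alpha> \<sigma> u v (p @ x) (p @ y)"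
  using homotopic_in_context[OF assms, of "[]" v] by simp

lemma homotopic_postpend:
  assumes "homotopic D \<alpha> \<sigma> u m x y" "is_walk D \<alpha> \<sigma> m q v"
  shows "homotopic D \<alpha> \<sigma> u v (x @ q) (y @ q)"
  using homotopic_in_context[OF assms(1) _ assms(2), of u "[]"] by simp

lemma homotopic_append:
  assumes "homotopic D \<alpha> \<sigma> u m x x'" "homotopic D \<alpha> \<sigma> m v y y'"
    and "is_walk D \<alpha> \<sigma> u x m" "is_walk D \<alpha> \<sigma> m y v"
  shows "homotopic D \<alpha> \<sigma> u v (x @ y) (x' @ y')"
  using homotopic_postpend[OF assms(1,4)] homotopic_prepend[OF assms(2) homotopic_is_walk[OF assms(1,3)]]
  by (rule homotopic_trans)

locale cmap =
  fixes D :: "'d set" and \<alpha> \<sigma> :: "'d \<Rightarrow> 'd"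
  assumes is_cmap: "is_cmap D \<alpha> \<sigma>"
begin

lemma alpha_in: "d \<in> D \<Longrightarrow> \<alpha> d \<in> D"
  and alpha_alpha [simp]: "d \<in> D \<Longrightarrow> \<alpha> (\<alpha> d) = d"
  and alpha_neq: "d \<in> D \<Longrightarrow> \<alpha> d \<noteq> d"
  using is_cmap unfolding is_cmap_def by auto

lemma sigma_bij: "bij_betw \<sigma> D D"
  using is_cmap unfolding is_cmap_def by auto

lemma sigma_in: "d \<in> D \<Longrightarrow> \<sigma> d \<in> D"
  using sigma_bij bij_betwE by metis

abbreviation \<phi> :: "'d \<Rightarrow> 'd" where "\<phi> \<equiv> fphi \<alpha> \<sigma>"
abbreviation \<psi> :: "'d \<Rightarrow> 'd" where "\<psi> \<equiv> inv_into D \<phi>"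

lemma alpha_bij: "bij_betw \<alpha> D D"
  by (rule bij_betw_byWitness[where f' = \<alpha>]) (auto simp: alpha_in)

lemma phi_bij: "bij_betw \<phi> D D"
  unfolding fphi_def using bij_betw_trans[OF alpha_bij sigma_bij] .

lemma phi_in: "d \<in> D \<Longrightarrow> \<phi> d \<in> D"
  using phi_bij bij_betwE by metis

lemma psi_in: "d \<in> D \<Longrightarrow> \<psi> d \<in> D"
  using bij_betw_inv_into[OF phi_bij] bij_betwE by metis

lemma phi_psi [simp]: "d \<in> D \<Longrightarrow> \<phi> (\<psi> d) = d"
  using phi_bij bij_betw_inv_into_right by metis

lemma psi_phi [simp]: "d \<in> D \<Longrightarrow> \<psi> (\<phi> d) = d"
  using phi_bij bij_betw_inv_into_left by metis

lemma sigma_alpha_psi [simp]: "d \<in> D \<Longrightarrow> \<sigma> (\<alpha> (\<psi> d)) = d"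
proof -
  assume "d \<in> D"
  then have "\<phi> (\<psi> d) = d" by simp
  then show ?thesis by (simp only: fphi_def comp_apply)
qed

lemma psi_sigma [simp]: "d \<in> D \<Longrightarrow> \<psi> (\<sigma> d) = \<alpha> d"
  using psi_phi[OF alpha_in] by (simp add: fphi_def)

lemma forb_subset: "d \<in> D \<Longrightarrow> forb \<alpha> \<sigma> d \<subseteq> D"
  unfolding forb_def using funpow_bij_betw_in[OF phi_bij] by blast

lemma is_walk_rev_walk: "is_walk D \<alpha> \<sigma> u w v \<Longrightarrow> is_walk D \<alpha> \<sigma> v (rev_walk \<alpha> w) u"
  by (induction w arbitrary: u) (auto intro!: is_walk_append simp: alpha_in)

lemma homotopic_cancel_backtrack:
  assumes w: "is_walk D \<alpha> \<sigma> u (xs @ [d, \<alpha> d] @ ys) v"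
  shows "homotopic D \<alpha> \<sigma> u v (xs @ [d, \<alpha> d] @ ys) (xs @ ys)"
proof -
  obtain m m' where "is_walk D \<alpha> \<sigma> u xs m" "is_walk D \<alpha> \<sigma> m [d, \<alpha> d] m'" "is_walk D \<alpha> \<sigma> m' ys v"
    using w is_walk_append_iff by metis
  moreover from this have "m = m'" "d \<in> D" by auto
  ultimately have "is_walk D \<alpha> \<sigma> u (xs @ ys) v" "hstep D \<alpha> \<sigma> (xs @ ys) (xs @ [d, \<alpha> d] @ ys)"
    unfolding hstep_def by (auto intro: is_walk_append)
  then show ?thesis using w by (blast intro: homotopic_sym homotopic_stepI)
qed

lemma homotopic_backtrack_nil:
  assumes "is_walk D \<alpha> \<sigma> u [d, \<alpha> d] v"
  shows "homotopic D \<alpha> \<sigma> u v [d, \<alpha> d] []"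
proof -
  have "d \<in> D" "u = v" using assms by auto
  then show ?thesis using homotopic_cancel_backtrack[of u "[]" d "[]" v] assms by simp
qed

lemma homotopic_rev_walk_cancel:
  "is_walk D \<alpha> \<sigma> u w v \<Longrightarrow> homotopic D \<alpha> \<sigma> u u (w @ rev_walk \<alpha> w) []"
proof (induction w arbitrary: u)
  case (Cons d w)
  then have w: "is_walk D \<alpha> \<sigma> (vorb \<sigma> (\<alpha> d)) w v" "d \<in> D" "vorb \<sigma> d = u" by auto
  have "homotopic D \<alpha> \<sigma> u u (d # w @ rev_walk \<alpha> w @ [\<alpha> d]) [d, \<alpha> d]"
    using homotopic_in_context[OF Cons.IH[OF w(1)], of u "[d]" "[\<alpha> d]" u] w by (simp add: alpha_in)
  also have "homotopic D \<alpha> \<sigma> u u [d, \<alpha> d] []"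
    using w by (intro homotopic_backtrack_nil) (simp add: alpha_in)
  finally show ?case by simp
qed simp

lemma homotopic_insert_rev_walk:
  assumes "is_walk D \<alpha> \<sigma> a xs u" "is_walk D \<alpha> \<sigma> u p v" "is_walk D \<alpha> \<sigma> u ys b"
  shows "homotopic D \<alpha> \<sigma> a b (xs @ (p @ rev_walk \<alpha> p) @ ys) (xs @ ys)"
  using homotopic_in_context[OF homotopic_rev_walk_cancel[OF assms(2)] assms(1,3)] by simp

lemma homotopic_insert_detours:
  assumes p: "is_walk D \<alpha> \<sigma> a p u" and q: "is_walk D \<alpha> \<sigma> u q v" and r: "is_walk D \<alpha> \<sigma> v r b"
    and s: "is_walk D \<alpha> \<sigma> u s m" and t: "is_walk D \<alpha> \<sigma> v t m'"
  shows "homotopic D \<alpha> \<sigma> a b (p @ q @ r) ((p @ s) @ (rev_walk \<alpha> s @ q @ t) @ (rev_walk \<alpha> t @ r))"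
proof -
  have "homotopic D \<alpha> \<sigma> a b (p @ q @ r) (p @ (s @ rev_walk \<alpha> s) @ q @ r)"
    using homotopic_insert_rev_walk[OF p s is_walk_append[OF q r]] by (rule homotopic_sym)
  also have "homotopic D \<alpha> \<sigma> a b \<dots> ((p @ s @ rev_walk \<alpha> s @ q) @ (t @ rev_walk \<alpha> t) @ r)"
    using homotopic_insert_rev_walk[OF _ t r, of a "p @ s @ rev_walk \<alpha> s @ q"]
      is_walk_append[OF p is_walk_append[OF s is_walk_append[OF is_walk_rev_walk[OF s] q]]]
    by (simp add: homotopic_sym)
  finally show ?thesis by simp
qed

lemma homotopic_nil_if_conjugate:
  assumes p: "is_walk D \<alpha> \<sigma> u p v" and w: "is_walk D \<alpha> \<sigma> u w u"
    and conj: "homotopic D \<alpha> \<sigma> v v (rev_walk \<alpha> p @ w @ p) []"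
  shows "homotopic D \<alpha> \<sigma> u u w []"
proof -
  have rp: "is_walk D \<alpha> \<sigma> v (rev_walk \<alpha> p) u" using is_walk_rev_walk[OF p] .
  have wp: "is_walk D \<alpha> \<sigma> u ((p @ rev_walk \<alpha> p) @ w) u"
    using p rp w by (blast intro: is_walk_append)
  have "homotopic D \<alpha> \<sigma> u u w ((p @ rev_walk \<alpha> p) @ w)"
    using homotopic_insert_rev_walk[where xs = "[]" and ys = w] p w by (simp add: homotopic_sym)
  also have "homotopic D \<alpha> \<sigma> u u \<dots> (((p @ rev_walk \<alpha> p) @ w) @ (p @ rev_walk \<alpha> p))"
    using homotopic_insert_rev_walk[OF wp p, where ys = "[]"] by (simp add: homotopic_sym)
  also have "\<dots> = p @ (rev_walk \<alpha> p @ w @ p) @ rev_walk \<alpha> p" by simp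
  also have "homotopic D \<alpha> \<sigma> u u \<dots> (p @ [] @ rev_walk \<alpha> p)"
    by (rule homotopic_in_context[OF conj p rp])
  also have "homotopic D \<alpha> \<sigma> u u \<dots> []"
    using homotopic_rev_walk_cancel[OF p] by simp
  finally show ?thesis .
qed

end

locale locally_finite_cmap = cmap +
  assumes finite_vorb: "d \<in> D \<Longrightarrow> finite (vorb \<sigma> d)"
    and finite_forb: "d \<in> D \<Longrightarrow> finite (forb \<alpha> \<sigma> d)"
begin

lemma vorb_eq_of_mem:
  assumes "d \<in> D" "e \<in> vorb \<sigma> d"
  shows "vorb \<sigma> e = vorb \<sigma> d"
proof -
  obtain p where "p > 0" "(\<sigma> ^^ p) d = d"
    using finite_orbit_periodic[OF sigma_bij assms(1)] finite_vorb[OF assms(1)]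
    unfolding vorb_def by blast
  from orbit_eq_of_mem[OF this assms(2)[unfolded vorb_def]] show ?thesis
    unfolding vorb_def .
qed

lemma vorb_sigma [simp]: "d \<in> D \<Longrightarrow> vorb \<sigma> (\<sigma> d) = vorb \<sigma> d"
  by (rule vorb_eq_of_mem[OF _ vorb_sigma_mem])

lemma forb_eq_of_mem:
  assumes "d \<in> D" "e \<in> forb \<alpha> \<sigma> d"
  shows "forb \<alpha> \<sigma> e = forb \<alpha> \<sigma> d"
proof -
  obtain p where "p > 0" "(\<phi> ^^ p) d = d"
    using finite_orbit_periodic[OF phi_bij assms(1)] finite_forb[OF assms(1)]
    unfolding forb_def by blast
  from orbit_eq_of_mem[OF this assms(2)[unfolded forb_def]] show ?thesis
    unfolding forb_def .
qed

lemma fdeg_period: "d \<in> D \<Longrightarrow> (\<phi> ^^ fdeg \<alpha> \<sigma> d) d = d"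
  and forb_eq_prefix: "d \<in> D \<Longrightarrow> forb \<alpha> \<sigma> d = {(\<phi> ^^ k) d |k. k < fdeg \<alpha> \<sigma> d}"
  and fdeg_pos: "d \<in> D \<Longrightarrow> fdeg \<alpha> \<sigma> d > 0"
  using finite_orbit_card[OF phi_bij _ finite_forb[unfolded forb_def]]
  unfolding fdeg_def forb_def by simp_all

lemma psi_orbit: "d \<in> D \<Longrightarrow> {(\<psi> ^^ n) d |n. True} = forb \<alpha> \<sigma> d"
  using orbit_inv_into[OF phi_bij _ finite_forb[unfolded forb_def]] unfolding forb_def by simp

end

lemma proper_map_locally_finite:
  assumes "proper_map D \<alpha> \<sigma>"
  shows "locally_finite_cmap D \<alpha> \<sigma>"
proof
  show "is_cmap D \<alpha> \<sigma>" using assms unfolding proper_map_def by blast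
  show "finite (vorb \<sigma> d)" "finite (forb \<alpha> \<sigma> d)" if "d \<in> D" for d
    using assms that unfolding proper_map_def by blast+
qed

section \<open>The quadrangular subdivision\<close>

text \<open>The subdivision has a vertex for every vertex, edge midpoint and face centre of the
  original map, and a quadrilateral face for every corner.  Each dart \<open>d\<close> contributes four darts
  \<open>(d, k)\<close>: \<open>VM\<close> runs from the tail of \<open>d\<close> to the midpoint of its edge, \<open>MF\<close> from that midpoint
  to the centre of the face on whose boundary \<open>d\<close> lies, and \<open>MV\<close>, \<open>FM\<close> are their reverses.\<close>

datatype qkind = VM | MV | MF | FM

definition qsub_darts :: "'d set \<Rightarrow> ('d \<times> qkind) set" where
  "qsub_darts D = D \<times> UNIV"

definition qsub_alpha :: "'d \<times> qkind \<Rightarrow> 'd \<times> qkind" where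
  "qsub_alpha = (\<lambda>(d, k). (d, case k of VM \<Rightarrow> MV | MV \<Rightarrow> VM | MF \<Rightarrow> FM | FM \<Rightarrow> MF))"

definition qsub_sigma :: "'d set \<Rightarrow> ('d \<Rightarrow> 'd) \<Rightarrow> ('d \<Rightarrow> 'd) \<Rightarrow> 'd \<times> qkind \<Rightarrow> 'd \<times> qkind" where
  "qsub_sigma D \<alpha> \<sigma> = (\<lambda>(d, k). case k of
     VM \<Rightarrow> (\<sigma> d, VM) | MV \<Rightarrow> (d, MF) | MF \<Rightarrow> (\<alpha> d, MV) | FM \<Rightarrow> (inv_into D (fphi \<alpha> \<sigma>) d, FM))"

lemma qsub_alpha_simps [simp]:
  "qsub_alpha (d, VM) = (d, MV)" "qsub_alpha (d, MV) = (d, VM)"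
  "qsub_alpha (d, MF) = (d, FM)" "qsub_alpha (d, FM) = (d, MF)"
  by (simp_all add: qsub_alpha_def)

lemma qsub_alpha_qsub_alpha [simp]: "qsub_alpha (qsub_alpha x) = x"
  and qsub_alpha_neq: "qsub_alpha x \<noteq> x"
  by (cases x; cases "snd x"; simp)+

lemma fst_qsub_alpha [simp]: "fst (qsub_alpha x) = fst x"
  by (simp add: qsub_alpha_def split: prod.split)

lemma qsub_darts_iff [simp]: "x \<in> qsub_darts D \<longleftrightarrow> fst x \<in> D"
  by (cases x) (simp add: qsub_darts_def)

lemma qsub_dartE:
  assumes "x \<in> qsub_darts D"
  obtains d where "d \<in> D" "x = (d, VM)" | d where "d \<in> D" "x = (d, MV)"
    | d where "d \<in> D" "x = (d, MF)" | d where "d \<in> D" "x = (d, FM)"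
  using assms by (cases x; cases "snd x") auto

definition qsub_vertex :: "'d set \<Rightarrow> ('d \<times> qkind) set" where
  "qsub_vertex u = (\<lambda>e. (e, VM)) ` u"

context locally_finite_cmap
begin

abbreviation D\<^sub>q where "D\<^sub>q \<equiv> qsub_darts D"
abbreviation \<sigma>\<^sub>q where "\<sigma>\<^sub>q \<equiv> qsub_sigma D \<alpha> \<sigma>"
abbreviation \<phi>\<^sub>q where "\<phi>\<^sub>q \<equiv> fphi qsub_alpha \<sigma>\<^sub>q"

lemma qsub_sigma_simps [simp]:
  "\<sigma>\<^sub>q (d, VM) = (\<sigma> d, VM)" "\<sigma>\<^sub>q (d, MV) = (d, MF)" "\<sigma>\<^sub>q (d, MF) = (\<alpha> d, MV)"
  "\<sigma>\<^sub>q (d, FM) = (\<psi> d, FM)"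
  by (simp_all add: qsub_sigma_def)

lemma qsub_phi_simps [simp]:
  "\<phi>\<^sub>q (d, VM) = (d, MF)" "\<phi>\<^sub>q (d, MV) = (\<sigma> d, VM)" "\<phi>\<^sub>q (d, MF) = (\<psi> d, FM)"
  "\<phi>\<^sub>q (d, FM) = (\<alpha> d, MV)"
  by (simp_all add: fphi_def)

lemma qsub_sigma_inj_on: "inj_on \<sigma>\<^sub>q D\<^sub>q"
proof (rule inj_onI)
  fix x y assume xy: "x \<in> D\<^sub>q" "y \<in> D\<^sub>q" "\<sigma>\<^sub>q x = \<sigma>\<^sub>q y"
  obtain d k e l where x: "x = (d, k)" and y: "y = (e, l)" by (cases x, cases y)
  have de: "d \<in> D" "e \<in> D" using xy(1,2) unfolding x y by simp_all
  have "inj_on \<sigma> D" "inj_on \<alpha> D" "inj_on \<psi> D"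
    using sigma_bij alpha_bij bij_betw_inv_into[OF phi_bij] by (simp_all add: bij_betw_def)
  then show "x = y" using xy(3) de unfolding x y
    by (cases k; cases l) (simp_all add: inj_on_eq_iff)
qed

lemma qsub_sigma_image: "\<sigma>\<^sub>q ` D\<^sub>q = D\<^sub>q"
proof
  show "\<sigma>\<^sub>q ` D\<^sub>q \<subseteq> D\<^sub>q"
  proof
    fix y assume "y \<in> \<sigma>\<^sub>q ` D\<^sub>q"
    then obtain d k where "d \<in> D" "y = \<sigma>\<^sub>q (d, k)" by force
    then show "y \<in> D\<^sub>q" by (cases k) (simp_all add: sigma_in alpha_in psi_in)
  qed
  show "D\<^sub>q \<subseteq> \<sigma>\<^sub>q ` D\<^sub>q"
  proof
    fix x assume "x \<in> D\<^sub>q"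
    then show "x \<in> \<sigma>\<^sub>q ` D\<^sub>q"
    proof (cases rule: qsub_dartE)
      case (1 d)
      then obtain e where "e \<in> D" "d = \<sigma> e" using bij_betw_imp_surj_on[OF sigma_bij] by blast
      then show ?thesis using 1 by (auto intro!: image_eqI[of _ _ "(e, VM)"])
    next
      case (2 d)
      then show ?thesis by (auto simp: alpha_in intro!: image_eqI[of _ _ "(\<alpha> d, MF)"])
    next
      case (3 d)
      then show ?thesis by (auto intro!: image_eqI[of _ _ "(d, MV)"])
    next
      case (4 d)
      then show ?thesis by (auto simp: phi_in intro!: image_eqI[of _ _ "(\<phi> d, FM)"])
    qed
  qed
qed

lemma qsub_cmap: "is_cmap D\<^sub>q qsub_alpha \<sigma>\<^sub>q"
  using qsub_sigma_inj_on qsub_sigma_image unfolding is_cmap_def bij_betw_def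
  by (auto simp: qsub_alpha_neq)

end

sublocale locally_finite_cmap \<subseteq> qsub: cmap "qsub_darts D" qsub_alpha "qsub_sigma D \<alpha> \<sigma>"
  by unfold_locales (rule qsub_cmap)

context locally_finite_cmap
begin

lemma qsub_phi_cycle:
  assumes "c \<in> D"
  shows "\<phi>\<^sub>q (c, VM) = (c, MF)" "\<phi>\<^sub>q (c, MF) = (\<psi> c, FM)" "\<phi>\<^sub>q (\<psi> c, FM) = (\<alpha> (\<psi> c), MV)"
    "\<phi>\<^sub>q (\<alpha> (\<psi> c), MV) = (c, VM)"
  using assms by simp_all

lemma qsub_forb:
  assumes "x \<in> D\<^sub>q"
  obtains c where "c \<in> D" "forb qsub_alpha \<sigma>\<^sub>q x = {(c, VM), (c, MF), (\<psi> c, FM), (\<alpha> (\<psi> c), MV)}"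
proof -
  have cycle: "forb qsub_alpha \<sigma>\<^sub>q x = {(c, VM), (c, MF), (\<psi> c, FM), (\<alpha> (\<psi> c), MV)}"
    if "c \<in> D" "x \<in> {(c, VM), (c, MF), (\<psi> c, FM), (\<alpha> (\<psi> c), MV)}" for c
    using orbit_4cycle[OF qsub_phi_cycle[OF \<open>c \<in> D\<close>] that(2)] unfolding forb_def .
  from assms show ?thesis
  proof (cases rule: qsub_dartE)
    case (1 d) then show ?thesis using that[of d] cycle[of d] by blast
  next
    case (2 d) then show ?thesis using that[of "\<sigma> d"] cycle[of "\<sigma> d"] bij_betwE[OF sigma_bij] by simp
  next
    case (3 d) then show ?thesis using that[of d] cycle[of d] by blast
  next
    case (4 d) then show ?thesis using that[of "\<phi> d"] cycle[of "\<phi> d"] phi_in by simp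
  qed
qed

lemma qsub_fdeg: "x \<in> D\<^sub>q \<Longrightarrow> fdeg qsub_alpha \<sigma>\<^sub>q x = 4"
  by (elim qsub_forb) (simp add: fdeg_def)

lemma qsub_finite_forb: "x \<in> D\<^sub>q \<Longrightarrow> finite (forb qsub_alpha \<sigma>\<^sub>q x)"
  by (elim qsub_forb) simp

lemma qsub_facewalk:
  assumes "c \<in> D"
  shows "facewalk qsub_alpha \<sigma>\<^sub>q (c, VM) = [(c, VM), (c, MF), (\<psi> c, FM), (\<alpha> (\<psi> c), MV)]"
proof -
  have "fdeg qsub_alpha \<sigma>\<^sub>q (c, VM) = 4" using qsub_fdeg assms by simp
  then show ?thesis using qsub_phi_cycle[OF assms]
    by (simp add: facewalk_def upt_rec numeral_2_eq_2 numeral_3_eq_3)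
qed

lemma qsub_vorb_vertex: "vorb \<sigma>\<^sub>q (d, VM) = qsub_vertex (vorb \<sigma> d)"
proof -
  have "(\<sigma>\<^sub>q ^^ n) (d, VM) = ((\<sigma> ^^ n) d, VM)" for n by (induction n) auto
  then show ?thesis unfolding vorb_def qsub_vertex_def by auto
qed

lemma qsub_vorb_edge:
  assumes "d \<in> D"
  shows "vorb \<sigma>\<^sub>q (d, MV) = {(d, MV), (d, MF), (\<alpha> d, MV), (\<alpha> d, MF)}"
    and "vorb \<sigma>\<^sub>q (d, MF) = {(d, MV), (d, MF), (\<alpha> d, MV), (\<alpha> d, MF)}"
  using orbit_4cycle[of \<sigma>\<^sub>q "(d, MV)" "(d, MF)" "(\<alpha> d, MV)" "(\<alpha> d, MF)"] assms
  unfolding vorb_def by simp_all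

lemma qsub_vorb_face:
  assumes "d \<in> D"
  shows "vorb \<sigma>\<^sub>q (d, FM) = (\<lambda>e. (e, FM)) ` forb \<alpha> \<sigma> d"
proof -
  have "(\<sigma>\<^sub>q ^^ n) (d, FM) = ((\<psi> ^^ n) d, FM)" for n by (induction n) auto
  then have "vorb \<sigma>\<^sub>q (d, FM) = (\<lambda>e. (e, FM)) ` {(\<psi> ^^ n) d |n. True}" unfolding vorb_def by auto
  then show ?thesis using psi_orbit[OF assms] by simp
qed

lemma qsub_vorb_eqs [simp]:
  assumes "d \<in> D"
  shows "vorb \<sigma>\<^sub>q (d, MF) = vorb \<sigma>\<^sub>q (d, MV)"
    and "vorb \<sigma>\<^sub>q (\<alpha> d, MV) = vorb \<sigma>\<^sub>q (d, MV)"
    and "vorb \<sigma>\<^sub>q (\<alpha> d, MF) = vorb \<sigma>\<^sub>q (d, MV)"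
    and "vorb \<sigma>\<^sub>q (\<sigma> d, VM) = vorb \<sigma>\<^sub>q (d, VM)"
  using qsub_vorb_edge[OF assms] qsub_vorb_edge[OF alpha_in[OF assms]] assms
  by (auto simp: qsub_vorb_vertex)

lemma qsub_vorb_face_eq:
  "d \<in> D \<Longrightarrow> e \<in> forb \<alpha> \<sigma> d \<Longrightarrow> vorb \<sigma>\<^sub>q (e, FM) = vorb \<sigma>\<^sub>q (d, FM)"
  using qsub_vorb_face forb_eq_of_mem forb_subset by (metis subsetD)

end

definition subdivide :: "('d \<Rightarrow> 'd) \<Rightarrow> 'd list \<Rightarrow> ('d \<times> qkind) list" where
  "subdivide \<alpha> w = concat (map (\<lambda>d. [(d, VM), (\<alpha> d, MV)]) w)"

lemma subdivide_simps [simp]: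
  "subdivide \<alpha> [] = []"
  "subdivide \<alpha> (d # w) = (d, VM) # (\<alpha> d, MV) # subdivide \<alpha> w"
  "subdivide \<alpha> (xs @ ys) = subdivide \<alpha> xs @ subdivide \<alpha> ys"
  by (simp_all add: subdivide_def)

lemma length_subdivide [simp]: "length (subdivide \<alpha> w) = 2 * length w"
  by (induction w) simp_all

definition home_path :: "'d \<times> qkind \<Rightarrow> ('d \<times> qkind) list" where
  "home_path = (\<lambda>(d, k). case k of VM \<Rightarrow> [] | MV \<Rightarrow> [(d, MV)] | MF \<Rightarrow> [(d, MV)] | FM \<Rightarrow> [(d, FM), (d, MV)])"

lemma home_path_simps [simp]:
  "home_path (d, VM) = []" "home_path (d, MV) = [(d, MV)]" "home_path (d, MF) = [(d, MV)]"
  "home_path (d, FM) = [(d, FM), (d, MV)]"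
  by (simp_all add: home_path_def)

lemma length_home_path: "length (home_path x) \<le> 2"
  by (cases x; cases "snd x") simp_all

context locally_finite_cmap
begin

abbreviation is_qwalk where "is_qwalk \<equiv> is_walk D\<^sub>q qsub_alpha \<sigma>\<^sub>q"
abbreviation qhomotopic where "qhomotopic \<equiv> homotopic D\<^sub>q qsub_alpha \<sigma>\<^sub>q"

lemma is_qwalk_home_path: "x \<in> D\<^sub>q \<Longrightarrow> is_qwalk (vorb \<sigma>\<^sub>q x) (home_path x) (vorb \<sigma>\<^sub>q (fst x, VM))"
  by (elim qsub_dartE) simp_all

lemma is_qwalk_rev_home_path:
  "x \<in> D\<^sub>q \<Longrightarrow> is_qwalk (vorb \<sigma>\<^sub>q (fst x, VM)) (rev_walk qsub_alpha (home_path x)) (vorb \<sigma>\<^sub>q x)"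
  using qsub.is_walk_rev_walk[OF is_qwalk_home_path] .

lemma is_qwalk_subdivide:
  "is_walk D \<alpha> \<sigma> u w v \<Longrightarrow> is_qwalk (qsub_vertex u) (subdivide \<alpha> w) (qsub_vertex v)"
proof (induction w arbitrary: u)
  case (Cons d w)
  then have "d \<in> D" "u = vorb \<sigma> d" "is_qwalk (vorb \<sigma>\<^sub>q (\<alpha> d, VM)) (subdivide \<alpha> w) (qsub_vertex v)"
    by (auto simp: qsub_vorb_vertex)
  then show ?case by (simp add: qsub_vorb_vertex alpha_in)
qed (simp add: qsub_vertex_def)

lemma is_walk_face_prefix:
  assumes "d \<in> D"
  shows "is_walk D \<alpha> \<sigma> (vorb \<sigma> d) (map (\<lambda>i. (\<phi> ^^ i) d) [0..<n]) (vorb \<sigma> ((\<phi> ^^ n) d))"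
proof (induction n)
  case (Suc n)
  let ?c = "(\<phi> ^^ n) d"
  have "?c \<in> D" using funpow_bij_betw_in[OF phi_bij assms] .
  then have "is_walk D \<alpha> \<sigma> (vorb \<sigma> ?c) [?c] (vorb \<sigma> (\<phi> ?c))"
    using vorb_sigma[OF alpha_in] by (simp add: fphi_def)
  then show ?case using Suc is_walk_append by fastforce
qed simp

lemma qsub_edge_null:
  "d \<in> D \<Longrightarrow> qhomotopic (vorb \<sigma>\<^sub>q (d, VM)) (vorb \<sigma>\<^sub>q (d, VM)) [(d, VM), (d, MV)] []"
  using qsub.homotopic_backtrack_nil[of _ "(d, VM)"] by simp

lemma qsub_spike_null:
  assumes "d \<in> D"
  shows "qhomotopic (vorb \<sigma>\<^sub>q (d, VM)) (vorb \<sigma>\<^sub>q (d, VM)) [(d, VM), (d, MF), (d, FM), (d, MV)] []"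
proof -
  have "qhomotopic (vorb \<sigma>\<^sub>q (d, VM)) (vorb \<sigma>\<^sub>q (d, VM))
      [(d, VM), (d, MF), (d, FM), (d, MV)] [(d, VM), (d, MV)]"
    using qsub.homotopic_cancel_backtrack[of _ "[(d, VM)]" "(d, MF)" "[(d, MV)]"] assms by simp
  also have "qhomotopic (vorb \<sigma>\<^sub>q (d, VM)) (vorb \<sigma>\<^sub>q (d, VM)) \<dots> []"
    using qsub_edge_null[OF assms] .
  finally show ?thesis .
qed

lemma home_edge_null:
  assumes "x \<in> D\<^sub>q"
  shows "qhomotopic (vorb \<sigma>\<^sub>q (fst x, VM)) (vorb \<sigma>\<^sub>q (fst x, VM))
           (rev_walk qsub_alpha (home_path x) @ [x] @ home_path (qsub_alpha x)) []"
  using assms by (cases rule: qsub_dartE) (simp_all add: qsub_edge_null qsub_spike_null)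

lemma quad_face_homotopic:
  assumes c: "c \<in> D"
  shows "qhomotopic (vorb \<sigma>\<^sub>q (c, FM)) (vorb \<sigma>\<^sub>q (\<phi> c, VM)) [(c, FM), (\<alpha> c, MV)] [(\<phi> c, FM), (\<phi> c, MV)]"
proof -
  let ?c' = "\<phi> c"
  have c': "?c' \<in> D" using phi_in[OF c] .
  have centre: "vorb \<sigma>\<^sub>q (?c', FM) = vorb \<sigma>\<^sub>q (c, FM)"
    using qsub_vorb_face_eq[OF c forb_phi_pow_mem[where n = 1]] by simp
  have tip: "vorb \<sigma>\<^sub>q (\<alpha> c, VM) = vorb \<sigma>\<^sub>q (?c', VM)"
    using qsub_vorb_eqs(4)[OF alpha_in[OF c]] by (simp add: fphi_def)
  have walk: "is_qwalk (vorb \<sigma>\<^sub>q (c, FM)) [(?c', FM), (?c', MV), (?c', VM), (?c', MF), (c, FM), (\<alpha> c, MV)]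
      (vorb \<sigma>\<^sub>q (?c', VM))"
    and walk_short: "is_qwalk (vorb \<sigma>\<^sub>q (c, FM)) [(?c', FM), (?c', MV)] (vorb \<sigma>\<^sub>q (?c', VM))"
    using c c' centre tip by (simp_all add: alpha_in)
  have "hstep D\<^sub>q qsub_alpha \<sigma>\<^sub>q ([(?c', FM), (?c', MV)] @ [])
      ([(?c', FM), (?c', MV)] @ facewalk qsub_alpha \<sigma>\<^sub>q (?c', VM) @ [])"
    unfolding hstep_def
    by (rule exI[of _ "[(?c', FM), (?c', MV)]"], rule exI[of _ "[]"], rule exI[of _ "(?c', VM)"])
      (simp add: c')
  then have "hstep D\<^sub>q qsub_alpha \<sigma>\<^sub>q [(?c', FM), (?c', MV)]
      [(?c', FM), (?c', MV), (?c', VM), (?c', MF), (c, FM), (\<alpha> c, MV)]"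
    using qsub_facewalk[OF c'] c by simp
  then have "qhomotopic (vorb \<sigma>\<^sub>q (c, FM)) (vorb \<sigma>\<^sub>q (?c', VM)) [(?c', FM), (?c', MV)]
      [(?c', FM), (?c', MV), (?c', VM), (?c', MF), (c, FM), (\<alpha> c, MV)]"
    by (rule homotopic_stepI[OF walk_short walk])
  also have "qhomotopic (vorb \<sigma>\<^sub>q (c, FM)) (vorb \<sigma>\<^sub>q (?c', VM)) \<dots> [(?c', FM), (?c', MF), (c, FM), (\<alpha> c, MV)]"
    using qsub.homotopic_cancel_backtrack[of _ "[(?c', FM)]" "(?c', MV)" "[(?c', MF), (c, FM), (\<alpha> c, MV)]"]
      c c' centre tip by (simp add: alpha_in)
  also have "qhomotopic (vorb \<sigma>\<^sub>q (c, FM)) (vorb \<sigma>\<^sub>q (?c', VM)) \<dots> [(c, FM), (\<alpha> c, MV)]"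
    using qsub.homotopic_cancel_backtrack[of _ "[]" "(?c', FM)" "[(c, FM), (\<alpha> c, MV)]"]
      c c' centre tip by (simp add: alpha_in)
  finally show ?thesis by (rule homotopic_sym)
qed

lemma face_detour_homotopic:
  assumes d: "d \<in> D"
  shows "qhomotopic (vorb \<sigma>\<^sub>q (d, VM)) (vorb \<sigma>\<^sub>q ((\<phi> ^^ n) d, VM))
           [(d, VM), (d, MF), ((\<phi> ^^ n) d, FM), ((\<phi> ^^ n) d, MV)]
           (subdivide \<alpha> (map (\<lambda>i. (\<phi> ^^ i) d) [0..<n]))"
proof (induction n)
  case 0
  show ?case using qsub_spike_null[OF d] by simp
next
  case (Suc n)
  let ?c = "(\<phi> ^^ n) d"
  have c: "?c \<in> D" using funpow_bij_betw_in[OF phi_bij d] .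
  have centre: "vorb \<sigma>\<^sub>q (?c, FM) = vorb \<sigma>\<^sub>q (d, FM)"
    using qsub_vorb_face_eq[OF d forb_phi_pow_mem] .
  have tip: "vorb \<sigma>\<^sub>q (\<alpha> ?c, VM) = vorb \<sigma>\<^sub>q (\<phi> ?c, VM)"
    using qsub_vorb_eqs(4)[OF alpha_in[OF c]] by (simp add: fphi_def)
  have "qhomotopic (vorb \<sigma>\<^sub>q (d, VM)) (vorb \<sigma>\<^sub>q (\<phi> ?c, VM))
      ([(d, VM), (d, MF)] @ [(\<phi> ?c, FM), (\<phi> ?c, MV)]) ([(d, VM), (d, MF)] @ [(?c, FM), (\<alpha> ?c, MV)])"
    using homotopic_prepend[OF homotopic_sym[OF quad_face_homotopic[OF c]], of "vorb \<sigma>\<^sub>q (d, VM)" "[(d, VM), (d, MF)]"]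
      d centre by simp
  also have "qhomotopic (vorb \<sigma>\<^sub>q (d, VM)) (vorb \<sigma>\<^sub>q (\<phi> ?c, VM)) \<dots>
      ([(d, VM), (d, MF), (?c, FM)] @ [(?c, MV), qsub_alpha (?c, MV)] @ [(\<alpha> ?c, MV)])"
    using qsub.homotopic_cancel_backtrack[of _ "[(d, VM), (d, MF), (?c, FM)]" "(?c, MV)" "[(\<alpha> ?c, MV)]"]
      d c centre tip by (simp add: homotopic_sym alpha_in)
  also have "qhomotopic (vorb \<sigma>\<^sub>q (d, VM)) (vorb \<sigma>\<^sub>q (\<phi> ?c, VM)) \<dots>
      (subdivide \<alpha> (map (\<lambda>i. (\<phi> ^^ i) d) [0..<n]) @ [(?c, VM), (\<alpha> ?c, MV)])"
    using homotopic_postpend[OF Suc.IH, of "[(?c, VM), (\<alpha> ?c, MV)]" "vorb \<sigma>\<^sub>q (\<phi> ?c, VM)"]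
      c tip by (simp add: alpha_in)
  finally show ?case by simp
qed

lemma home_paths_homotopic:
  assumes x: "x \<in> D\<^sub>q" and y: "y \<in> D\<^sub>q" and xy: "vorb \<sigma>\<^sub>q x = vorb \<sigma>\<^sub>q y"
  obtains Q where "is_walk D \<alpha> \<sigma> (vorb \<sigma> (fst x)) Q (vorb \<sigma> (fst y))" "length Q \<le> fdeg \<alpha> \<sigma> (fst x)"
    "qhomotopic (vorb \<sigma>\<^sub>q (fst x, VM)) (vorb \<sigma>\<^sub>q (fst y, VM))
       (rev_walk qsub_alpha (home_path x) @ home_path y) (subdivide \<alpha> Q)"
proof -
  obtain d k where d: "d \<in> D" and x_dk: "x = (d, k)" using x by (cases x) simp
  have y_at_x: "y \<in> vorb \<sigma>\<^sub>q x" using xy vorb_self by metis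
  consider "k = VM" | "k = MV \<or> k = MF" | "k = FM" by (cases k) simp_all
  then show thesis
  proof cases
    case 1
    then obtain e where "y = (e, VM)" "e \<in> vorb \<sigma> d" using y_at_x x_dk qsub_vorb_vertex by (auto simp: qsub_vertex_def)
    then show ?thesis using that[of "[]"] 1 x_dk d vorb_eq_of_mem by simp
  next
    case 2
    then have home_x: "rev_walk qsub_alpha (home_path x) = [(d, VM)]" using x_dk by auto
    have "y \<in> {(d, MV), (d, MF), (\<alpha> d, MV), (\<alpha> d, MF)}"
      using y_at_x 2 x_dk qsub_vorb_edge[OF d] by auto
    then consider "y = (d, MV) \<or> y = (d, MF)" | "y = (\<alpha> d, MV) \<or> y = (\<alpha> d, MF)" by blast
    then show ?thesis
    proof cases
      case 1
      then show ?thesis using that[of "[]"] home_x x_dk qsub_edge_null[OF d] by auto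
    next
      case 2
      then show ?thesis using that[of "[d]"] home_x x_dk d fdeg_pos[OF d] by (auto simp: alpha_in)
    qed
  next
    case 3
    then obtain n where "y = ((\<phi> ^^ n) d, FM)" "n < fdeg \<alpha> \<sigma> d"
      using y_at_x x_dk qsub_vorb_face[OF d] forb_eq_prefix[OF d] by auto
    then show ?thesis
      using that[of "map (\<lambda>i. (\<phi> ^^ i) d) [0..<n]"] 3 x_dk d face_detour_homotopic is_walk_face_prefix
      by simp
  qed
qed

lemma is_qwalk_home_conj:
  assumes "x \<in> D\<^sub>q" "y \<in> D\<^sub>q" "is_qwalk (vorb \<sigma>\<^sub>q x) w (vorb \<sigma>\<^sub>q y)"
  shows "is_qwalk (vorb \<sigma>\<^sub>q (fst x, VM)) (rev_walk qsub_alpha (home_path x) @ w @ home_path y)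
           (vorb \<sigma>\<^sub>q (fst y, VM))"
  using is_walk_append[OF is_qwalk_rev_home_path[OF assms(1)] is_walk_append[OF assms(3)
        is_qwalk_home_path[OF assms(2)]]] .

lemma home_conj_Cons_homotopic:
  assumes x: "x \<in> D\<^sub>q" and y: "y \<in> D\<^sub>q" and e: "e \<in> D\<^sub>q" "vorb \<sigma>\<^sub>q e = vorb \<sigma>\<^sub>q x"
    and w: "is_qwalk (vorb \<sigma>\<^sub>q (qsub_alpha e)) w (vorb \<sigma>\<^sub>q y)"
  shows "qhomotopic (vorb \<sigma>\<^sub>q (fst x, VM)) (vorb \<sigma>\<^sub>q (fst y, VM))
           (rev_walk qsub_alpha (home_path x) @ (e # w) @ home_path y)
           ((rev_walk qsub_alpha (home_path x) @ home_path e) @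
            (rev_walk qsub_alpha (home_path (qsub_alpha e)) @ w @ home_path y))"
proof -
  let ?X = "vorb \<sigma>\<^sub>q (fst x, VM)" and ?E = "vorb \<sigma>\<^sub>q (fst e, VM)" and ?Y = "vorb \<sigma>\<^sub>q (fst y, VM)"
  have ae: "qsub_alpha e \<in> D\<^sub>q" using e(1) by simp
  have we: "is_qwalk (vorb \<sigma>\<^sub>q x) (home_path e) ?E"
    using is_qwalk_home_path[OF e(1)] unfolding e(2) .
  have wee: "is_qwalk (vorb \<sigma>\<^sub>q x) [e] (vorb \<sigma>\<^sub>q (qsub_alpha e))"
    using e by simp
  have wae: "is_qwalk (vorb \<sigma>\<^sub>q (qsub_alpha e)) (home_path (qsub_alpha e)) ?E"
    using is_qwalk_home_path[OF ae] by simp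
  have "qhomotopic ?X ?Y (rev_walk qsub_alpha (home_path x) @ [e] @ w @ home_path y)
      ((rev_walk qsub_alpha (home_path x) @ home_path e) @
       (rev_walk qsub_alpha (home_path e) @ [e] @ home_path (qsub_alpha e)) @
       (rev_walk qsub_alpha (home_path (qsub_alpha e)) @ w @ home_path y))"
    by (rule qsub.homotopic_insert_detours[OF is_qwalk_rev_home_path[OF x] wee
          is_walk_append[OF w is_qwalk_home_path[OF y]] we wae])
  also have "qhomotopic ?X ?Y \<dots>
      ((rev_walk qsub_alpha (home_path x) @ home_path e) @ [] @
       (rev_walk qsub_alpha (home_path (qsub_alpha e)) @ w @ home_path y))"
  proof -
    have "is_qwalk ?X (rev_walk qsub_alpha (home_path x) @ home_path e) ?E"
      using is_qwalk_home_conj[OF x e(1), of "[]"] e(2) by simp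
    moreover have "is_qwalk ?E (rev_walk qsub_alpha (home_path (qsub_alpha e)) @ w @ home_path y) ?Y"
      using is_qwalk_home_conj[OF ae y w] by simp
    ultimately show ?thesis by (rule homotopic_in_context[OF home_edge_null[OF e(1)]])
  qed
  finally show ?thesis by simp
qed

lemma qwalk_homotopic_subdivided:
  assumes "x \<in> D\<^sub>q" "y \<in> D\<^sub>q" "is_qwalk (vorb \<sigma>\<^sub>q x) w (vorb \<sigma>\<^sub>q y)"
  shows "\<exists>Q. is_walk D \<alpha> \<sigma> (vorb \<sigma> (fst x)) Q (vorb \<sigma> (fst y)) \<and>
           length Q \<le> (\<Sum>z\<leftarrow>x # w. fdeg \<alpha> \<sigma> (fst z)) \<and>
           qhomotopic (vorb \<sigma>\<^sub>q (fst x, VM)) (vorb \<sigma>\<^sub>q (fst y, VM))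
             (rev_walk qsub_alpha (home_path x) @ w @ home_path y) (subdivide \<alpha> Q)"
  using assms
proof (induction w arbitrary: x)
  case Nil
  then have "vorb \<sigma>\<^sub>q x = vorb \<sigma>\<^sub>q y" by simp
  from home_paths_homotopic[OF Nil.prems(1,2) this] show ?case by fastforce
next
  case (Cons e w)
  let ?X = "vorb \<sigma>\<^sub>q (fst x, VM)" and ?E = "vorb \<sigma>\<^sub>q (fst e, VM)" and ?Y = "vorb \<sigma>\<^sub>q (fst y, VM)"
  have e: "e \<in> D\<^sub>q" "vorb \<sigma>\<^sub>q e = vorb \<sigma>\<^sub>q x"
    and w: "is_qwalk (vorb \<sigma>\<^sub>q (qsub_alpha e)) w (vorb \<sigma>\<^sub>q y)"
    using Cons.prems(3) by auto
  have ae: "qsub_alpha e \<in> D\<^sub>q" using e(1) by simp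
  obtain Q1 where Q1: "is_walk D \<alpha> \<sigma> (vorb \<sigma> (fst x)) Q1 (vorb \<sigma> (fst e))"
    "length Q1 \<le> fdeg \<alpha> \<sigma> (fst x)"
    "qhomotopic ?X ?E (rev_walk qsub_alpha (home_path x) @ home_path e) (subdivide \<alpha> Q1)"
    using home_paths_homotopic[OF Cons.prems(1) e(1) e(2)[symmetric]] by blast
  obtain Q2 where Q2: "is_walk D \<alpha> \<sigma> (vorb \<sigma> (fst e)) Q2 (vorb \<sigma> (fst y))"
    "length Q2 \<le> (\<Sum>z\<leftarrow>qsub_alpha e # w. fdeg \<alpha> \<sigma> (fst z))"
    "qhomotopic ?E ?Y (rev_walk qsub_alpha (home_path (qsub_alpha e)) @ w @ home_path y) (subdivide \<alpha> Q2)"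
    using Cons.IH[OF ae Cons.prems(2) w] by auto
  have "is_qwalk ?X (rev_walk qsub_alpha (home_path x) @ home_path e) ?E"
    using is_qwalk_home_conj[OF Cons.prems(1) e(1), of "[]"] e(2) by simp
  moreover have "is_qwalk ?E (rev_walk qsub_alpha (home_path (qsub_alpha e)) @ w @ home_path y) ?Y"
    using is_qwalk_home_conj[OF ae Cons.prems(2) w] by simp
  ultimately have "qhomotopic ?X ?Y
      ((rev_walk qsub_alpha (home_path x) @ home_path e) @
       (rev_walk qsub_alpha (home_path (qsub_alpha e)) @ w @ home_path y))
      (subdivide \<alpha> Q1 @ subdivide \<alpha> Q2)"
    by (rule homotopic_append[OF Q1(3) Q2(3)])
  with home_conj_Cons_homotopic[OF Cons.prems(1,2) e w]
  have "qhomotopic ?X ?Y (rev_walk qsub_alpha (home_path x) @ (e # w) @ home_path y)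
      (subdivide \<alpha> (Q1 @ Q2))" by (simp add: homotopic_trans)
  moreover have "is_walk D \<alpha> \<sigma> (vorb \<sigma> (fst x)) (Q1 @ Q2) (vorb \<sigma> (fst y))"
    using is_walk_append[OF Q1(1) Q2(1)] .
  moreover have "length (Q1 @ Q2) \<le> (\<Sum>z\<leftarrow>x # e # w. fdeg \<alpha> \<sigma> (fst z))"
    using Q1(2) Q2(2) by simp
  ultimately show ?case by blast
qed

lemma subdivide_backtrack_null:
  assumes d: "d \<in> D"
  shows "qhomotopic (vorb \<sigma>\<^sub>q (d, VM)) (vorb \<sigma>\<^sub>q (d, VM)) (subdivide \<alpha> [d, \<alpha> d]) []"
proof -
  have "qhomotopic (vorb \<sigma>\<^sub>q (d, VM)) (vorb \<sigma>\<^sub>q (d, VM))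
      ([(d, VM)] @ [(\<alpha> d, MV), qsub_alpha (\<alpha> d, MV)] @ [(d, MV)]) ([(d, VM)] @ [(d, MV)])"
    using qsub.homotopic_cancel_backtrack[of _ "[(d, VM)]" "(\<alpha> d, MV)" "[(d, MV)]"] d
    by (simp add: alpha_in)
  then show ?thesis using homotopic_trans qsub_edge_null[OF d] d by fastforce
qed

lemma subdivide_facewalk_null:
  assumes d: "d \<in> D"
  shows "qhomotopic (vorb \<sigma>\<^sub>q (d, VM)) (vorb \<sigma>\<^sub>q (d, VM)) (subdivide \<alpha> (facewalk \<alpha> \<sigma> d)) []"
proof -
  have "qhomotopic (vorb \<sigma>\<^sub>q (d, VM)) (vorb \<sigma>\<^sub>q (d, VM))
      [(d, VM), (d, MF), (d, FM), (d, MV)] (subdivide \<alpha> (facewalk \<alpha> \<sigma> d))"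
    using face_detour_homotopic[OF d, of "fdeg \<alpha> \<sigma> d"] unfolding fdeg_period[OF d] facewalk_def .
  then show ?thesis using homotopic_trans[OF homotopic_sym qsub_spike_null[OF d]] by blast
qed

lemma subdivide_hstep:
  assumes w: "is_walk D \<alpha> \<sigma> u w v" and w': "is_walk D \<alpha> \<sigma> u w' v" and step: "hstep D \<alpha> \<sigma> w w'"
  shows "qhomotopic (qsub_vertex u) (qsub_vertex v) (subdivide \<alpha> w') (subdivide \<alpha> w)"
proof -
  obtain xs ys d piece where d: "d \<in> D" and ww': "w = xs @ ys" "w' = xs @ piece @ ys"
    and piece: "piece = [d, \<alpha> d] \<or> piece = facewalk \<alpha> \<sigma> d"
    using step unfolding hstep_def by blast
  obtain m where xs: "is_walk D \<alpha> \<sigma> u xs m" and ys: "is_walk D \<alpha> \<sigma> m ys v"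
    using w ww'(1) is_walk_append_iff by metis
  obtain m1 m2 where "is_walk D \<alpha> \<sigma> u xs m1" "is_walk D \<alpha> \<sigma> m1 piece m2"
    using w' ww'(2) is_walk_append_iff by metis
  moreover have "\<exists>rest. piece = d # rest"
    using piece fdeg_pos[OF d] by (auto simp: facewalk_def upt_conv_Cons)
  ultimately have m: "m = vorb \<sigma> d" using is_walk_target_unique[OF xs] by fastforce
  have "qhomotopic (qsub_vertex m) (qsub_vertex m) (subdivide \<alpha> piece) []"
    using piece subdivide_backtrack_null[OF d] subdivide_facewalk_null[OF d]
    unfolding m qsub_vorb_vertex by blast
  from homotopic_in_context[OF this is_qwalk_subdivide[OF xs] is_qwalk_subdivide[OF ys]]
  show ?thesis unfolding ww' by simp
qed

lemma subdivide_homotopic: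
  assumes "homotopic D \<alpha> \<sigma> u v w w'"
  shows "qhomotopic (qsub_vertex u) (qsub_vertex v) (subdivide \<alpha> w) (subdivide \<alpha> w')"
  using assms unfolding homotopic_def[of D]
proof (induction rule: rtrancl_induct)
  case (step w' w'')
  then have "is_walk D \<alpha> \<sigma> u w' v" "is_walk D \<alpha> \<sigma> u w'' v"
    "hstep D \<alpha> \<sigma> w' w'' \<or> hstep D \<alpha> \<sigma> w'' w'"
    unfolding walk_homot_rel_def by auto
  then have "qhomotopic (qsub_vertex u) (qsub_vertex v) (subdivide \<alpha> w') (subdivide \<alpha> w'')"
    using subdivide_hstep homotopic_sym by metis
  with step.IH show ?case by (rule homotopic_trans)
qed simp

lemma qsub_connected:
  assumes "connected_map D \<alpha> \<sigma>"
  shows "connected_map D\<^sub>q qsub_alpha \<sigma>\<^sub>q"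
  unfolding connected_map_def
proof (intro ballI)
  fix u v assume "u \<in> verts D\<^sub>q \<sigma>\<^sub>q" "v \<in> verts D\<^sub>q \<sigma>\<^sub>q"
  then obtain a b where a: "a \<in> D\<^sub>q" "u = vorb \<sigma>\<^sub>q a" and b: "b \<in> D\<^sub>q" "v = vorb \<sigma>\<^sub>q b"
    unfolding verts_def by blast
  then obtain Q where "is_walk D \<alpha> \<sigma> (vorb \<sigma> (fst a)) Q (vorb \<sigma> (fst b))"
    using assms unfolding connected_map_def verts_def by auto
  then have "is_qwalk (vorb \<sigma>\<^sub>q (fst a, VM)) (subdivide \<alpha> Q) (vorb \<sigma>\<^sub>q (fst b, VM))"
    unfolding qsub_vorb_vertex by (rule is_qwalk_subdivide)
  then have "is_qwalk u (home_path a @ subdivide \<alpha> Q @ rev_walk qsub_alpha (home_path b)) v"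
    using is_qwalk_home_path[OF a(1)] is_qwalk_rev_home_path[OF b(1)] a(2) b(2)
    by (blast intro: is_walk_append)
  then show "\<exists>w. is_qwalk u w v" by blast
qed

lemma qsub_simply_connected:
  assumes "simply_connected_map D \<alpha> \<sigma>"
  shows "simply_connected_map D\<^sub>q qsub_alpha \<sigma>\<^sub>q"
  unfolding simply_connected_map_iff
proof (intro ballI allI impI)
  fix u w assume "u \<in> verts D\<^sub>q \<sigma>\<^sub>q" and w: "is_qwalk u w u"
  then obtain a where a: "a \<in> D\<^sub>q" "u = vorb \<sigma>\<^sub>q a" unfolding verts_def by blast
  let ?A = "vorb \<sigma> (fst a)"
  obtain Q where Q: "is_walk D \<alpha> \<sigma> ?A Q ?A"
    and conj: "qhomotopic (vorb \<sigma>\<^sub>q (fst a, VM)) (vorb \<sigma>\<^sub>q (fst a, VM))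
      (rev_walk qsub_alpha (home_path a) @ w @ home_path a) (subdivide \<alpha> Q)"
    using qwalk_homotopic_subdivided[OF a(1) a(1)] w a(2) by blast
  have "?A \<in> verts D \<sigma>" using a(1) unfolding verts_def by simp
  then have "homotopic D \<alpha> \<sigma> ?A ?A Q []" using assms Q unfolding simply_connected_map_iff by blast
  from subdivide_homotopic[OF this] have "qhomotopic (vorb \<sigma>\<^sub>q (fst a, VM)) (vorb \<sigma>\<^sub>q (fst a, VM))
      (subdivide \<alpha> Q) []" by (simp add: qsub_vorb_vertex)
  with conj have "qhomotopic (vorb \<sigma>\<^sub>q (fst a, VM)) (vorb \<sigma>\<^sub>q (fst a, VM))
      (rev_walk qsub_alpha (home_path a) @ w @ home_path a) []" by (rule homotopic_trans)
  then show "qhomotopic u u w []"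
    using qsub.homotopic_nil_if_conjugate is_qwalk_home_path[OF a(1)] w a(2) by blast
qed

lemma qsub_finite_vorb: "x \<in> D\<^sub>q \<Longrightarrow> finite (vorb \<sigma>\<^sub>q x)"
  by (elim qsub_dartE) (simp_all add: qsub_vorb_vertex qsub_vertex_def qsub_vorb_edge qsub_vorb_face finite_vorb finite_forb)

lemma qsub_proper_map:
  assumes "proper_map D \<alpha> \<sigma>"
  shows "proper_map D\<^sub>q qsub_alpha \<sigma>\<^sub>q"
proof -
  have "infinite D\<^sub>q"
    using assms finite_cartesian_productD1[of D "UNIV :: qkind set"]
    unfolding proper_map_def qsub_darts_def by auto
  then show ?thesis
    using assms qsub_cmap qsub_finite_vorb qsub_finite_forb qsub_connected qsub_simply_connected
    unfolding proper_map_def by blast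
qed

lemma qsub_nonflat_vertices:
  "nonflat_vertices D\<^sub>q \<sigma>\<^sub>q \<subseteq>
     qsub_vertex ` nonflat_vertices D \<sigma> \<union> (\<lambda>U. (\<lambda>e. (e, FM)) ` U) ` nonflat_faces D \<alpha> \<sigma>"
proof
  fix U assume "U \<in> nonflat_vertices D\<^sub>q \<sigma>\<^sub>q"
  then obtain x where x: "x \<in> D\<^sub>q" "U = vorb \<sigma>\<^sub>q x" "card (vorb \<sigma>\<^sub>q x) \<noteq> 4"
    unfolding nonflat_vertices_def vdeg_def by blast
  have card_tag: "card ((\<lambda>e. (e, k)) ` A) = card A" for k :: qkind and A :: "'a set"
    by (rule card_image) (simp add: inj_on_def)
  from x(1) show "U \<in> qsub_vertex ` nonflat_vertices D \<sigma> \<union>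
      (\<lambda>U. (\<lambda>e. (e, FM)) ` U) ` nonflat_faces D \<alpha> \<sigma>"
  proof (cases rule: qsub_dartE)
    case (1 d)
    then have "card (vorb \<sigma> d) \<noteq> 4"
      using x(3) card_tag[of VM] by (simp add: qsub_vorb_vertex qsub_vertex_def)
    then have "vorb \<sigma> d \<in> nonflat_vertices D \<sigma>"
      using 1 unfolding nonflat_vertices_def vdeg_def by blast
    then show ?thesis using x(2) 1 by (simp add: qsub_vorb_vertex)
  next
    case (2 d)
    then show ?thesis using x alpha_neq[of d] by (simp add: qsub_vorb_edge card_insert_if)
  next
    case (3 d)
    then show ?thesis using x alpha_neq[of d] by (simp add: qsub_vorb_edge card_insert_if)
  next
    case (4 d)
    then have "card (forb \<alpha> \<sigma> d) \<noteq> 4" using x(3) card_tag[of FM] by (simp add: qsub_vorb_face)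
    then have "forb \<alpha> \<sigma> d \<in> nonflat_faces D \<alpha> \<sigma>"
      using 4 unfolding nonflat_faces_def fdeg_def by blast
    then show ?thesis using x(2) 4 by (simp add: qsub_vorb_face)
  qed
qed

end

section \<open>Quasi-isometry\<close>

lemma gdist_le_length:
  assumes "is_walk D \<alpha> \<sigma> u w v"
  shows "gdist D \<alpha> \<sigma> u v \<le> real (length w)"
proof -
  have "(LEAST n. \<exists>w. is_walk D \<alpha> \<sigma> u w v \<and> length w = n) \<le> length w"
    using assms by (intro Least_le) blast
  then show ?thesis unfolding gdist_def by simp
qed

lemma gdist_attained:
  assumes "is_walk D \<alpha> \<sigma> u w\<^sub>0 v"
  obtains w where "is_walk D \<alpha> \<sigma> u w v" "gdist D \<alpha> \<sigma> u v = real (length w)"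
proof -
  have "\<exists>n w. is_walk D \<alpha> \<sigma> u w v \<and> length w = n" using assms by blast
  from LeastI_ex[OF this] obtain w where
    "is_walk D \<alpha> \<sigma> u w v" "length w = (LEAST n. \<exists>w. is_walk D \<alpha> \<sigma> u w v \<and> length w = n)"
    by blast
  then show ?thesis using that unfolding gdist_def by simp
qed

lemma quasi_isometricI:
  fixes c C :: real
  assumes f: "f ` X \<subseteq> Y" and c: "1 \<le> c"
    and nonneg: "\<And>x y. x \<in> X \<Longrightarrow> y \<in> X \<Longrightarrow> 0 \<le> dX x y"
    and upper: "\<And>x y. x \<in> X \<Longrightarrow> y \<in> X \<Longrightarrow> dY (f x) (f y) \<le> c * dX x y"
    and lower: "\<And>x y. x \<in> X \<Longrightarrow> y \<in> X \<Longrightarrow> dX x y \<le> c * (dY (f x) (f y) + 1)"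
    and dense: "\<And>z. z \<in> Y \<Longrightarrow> \<exists>x\<in>X. dY z (f x) \<le> C"
  shows "quasi_isometric X dX Y dY"
  unfolding quasi_isometric_def
proof (intro exI conjI ballI)
  show "f ` X \<subseteq> Y" "(1::real) < c + 1" "(0::real) < 2" using f c by simp_all
  fix x y assume xy: "x \<in> X" "y \<in> X"
  have "dX x y / (c + 1) \<le> dX x y / c"
    using nonneg[OF xy] c by (intro divide_left_mono) simp_all
  also have "\<dots> \<le> dY (f x) (f y) + 1"
    using lower[OF xy] c by (simp add: divide_le_eq mult.commute)
  finally show "- 2 + dX x y / (c + 1) < dY (f x) (f y)" by simp
  have "c * dX x y \<le> (c + 1) * dX x y" using nonneg[OF xy] by (simp add: mult_right_mono)
  then show "dY (f x) (f y) < 2 + (c + 1) * dX x y" using upper[OF xy] by simp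
next
  fix z assume "z \<in> Y"
  then show "\<exists>x\<in>X. dY z (f x) \<le> C" by (rule dense)
qed

context locally_finite_cmap
begin

lemma fdeg_bounded:
  assumes "finite (nonflat_faces D \<alpha> \<sigma>)"
  obtains F where "\<forall>d\<in>D. fdeg \<alpha> \<sigma> d \<le> F"
proof -
  obtain m where m: "\<forall>k\<in>card ` nonflat_faces D \<alpha> \<sigma>. k \<le> m"
    using finite_imageI[OF assms, of card] finite_nat_set_iff_bounded_le by blast
  have "fdeg \<alpha> \<sigma> d \<le> max 4 m" if "d \<in> D" for d
  proof (cases "fdeg \<alpha> \<sigma> d = 4")
    case False
    then have "forb \<alpha> \<sigma> d \<in> nonflat_faces D \<alpha> \<sigma>" using that unfolding nonflat_faces_def by blast
    then have "card (forb \<alpha> \<sigma> d) \<le> m" using m by blast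
    then show ?thesis by (simp add: fdeg_def)
  qed simp
  then show ?thesis using that by blast
qed

lemma qsub_gdist_le:
  assumes conn: "connected_map D \<alpha> \<sigma>" and "u \<in> verts D \<sigma>" "v \<in> verts D \<sigma>"
  shows "gdist D\<^sub>q qsub_alpha \<sigma>\<^sub>q (qsub_vertex u) (qsub_vertex v) \<le> 2 * gdist D \<alpha> \<sigma> u v"
proof -
  obtain w\<^sub>0 where "is_walk D \<alpha> \<sigma> u w\<^sub>0 v" using conn assms unfolding connected_map_def by blast
  then obtain w where w: "is_walk D \<alpha> \<sigma> u w v" "gdist D \<alpha> \<sigma> u v = real (length w)"
    by (rule gdist_attained)
  show ?thesis using gdist_le_length[OF is_qwalk_subdivide[OF w(1)]] w(2) by simp
qed

lemma gdist_le_qsub_gdist: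
  assumes F: "\<forall>d\<in>D. fdeg \<alpha> \<sigma> d \<le> F" and conn: "connected_map D\<^sub>q qsub_alpha \<sigma>\<^sub>q"
    and u: "u \<in> verts D \<sigma>" and v: "v \<in> verts D \<sigma>"
  shows "gdist D \<alpha> \<sigma> u v \<le> F * (gdist D\<^sub>q qsub_alpha \<sigma>\<^sub>q (qsub_vertex u) (qsub_vertex v) + 1)"
proof -
  obtain d\<^sub>1 d\<^sub>2 where d: "d\<^sub>1 \<in> D" "u = vorb \<sigma> d\<^sub>1" "d\<^sub>2 \<in> D" "v = vorb \<sigma> d\<^sub>2"
    using u v unfolding verts_def by blast
  then have "qsub_vertex u \<in> verts D\<^sub>q \<sigma>\<^sub>q" "qsub_vertex v \<in> verts D\<^sub>q \<sigma>\<^sub>q"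
    unfolding verts_def by (auto simp flip: qsub_vorb_vertex)
  then obtain w\<^sub>0 where "is_qwalk (qsub_vertex u) w\<^sub>0 (qsub_vertex v)"
    using conn unfolding connected_map_def by blast
  then obtain w where w: "is_qwalk (qsub_vertex u) w (qsub_vertex v)"
    "gdist D\<^sub>q qsub_alpha \<sigma>\<^sub>q (qsub_vertex u) (qsub_vertex v) = real (length w)"
    by (rule gdist_attained)
  obtain Q where Q: "is_walk D \<alpha> \<sigma> u Q v" "length Q \<le> (\<Sum>z\<leftarrow>(d\<^sub>1, VM) # w. fdeg \<alpha> \<sigma> (fst z))"
    using qwalk_homotopic_subdivided[of "(d\<^sub>1, VM)" "(d\<^sub>2, VM)" w] w(1) d
    by (auto simp: qsub_vorb_vertex)
  have "(\<Sum>z\<leftarrow>(d\<^sub>1, VM) # w. fdeg \<alpha> \<sigma> (fst z)) \<le> (\<Sum>z\<leftarrow>(d\<^sub>1, VM) # w. F)"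
    using F d(1) is_walk_darts[OF w(1)] by (intro sum_list_mono) auto
  then have "length Q \<le> (length w + 1) * F" using Q(2) by (simp add: sum_list_triv)
  then have "real (length Q) \<le> real ((length w + 1) * F)" by (simp only: of_nat_le_iff)
  then have "real (length Q) \<le> F * (real (length w) + 1)" by (simp add: algebra_simps)
  then show ?thesis using gdist_le_length[OF Q(1)] w(2) by simp
qed

lemma qsub_vertices_near_lift:
  assumes "z \<in> verts D\<^sub>q \<sigma>\<^sub>q"
  shows "\<exists>u\<in>verts D \<sigma>. gdist D\<^sub>q qsub_alpha \<sigma>\<^sub>q z (qsub_vertex u) \<le> 2"
proof -
  obtain x where x: "x \<in> D\<^sub>q" "z = vorb \<sigma>\<^sub>q x" using assms unfolding verts_def by blast
  have "gdist D\<^sub>q qsub_alpha \<sigma>\<^sub>q z (qsub_vertex (vorb \<sigma> (fst x))) \<le> real (length (home_path x))"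
    using gdist_le_length is_qwalk_home_path[OF x(1)] x(2) qsub_vorb_vertex by metis
  also have "\<dots> \<le> 2" using length_home_path[of x] by simp
  finally show ?thesis using x(1) unfolding verts_def by auto
qed

lemma qsub_quasi_isometric:
  assumes F: "\<forall>d\<in>D. fdeg \<alpha> \<sigma> d \<le> F" and conn: "connected_map D \<alpha> \<sigma>"
  shows "quasi_isometric (verts D \<sigma>) (gdist D \<alpha> \<sigma>) (verts D\<^sub>q \<sigma>\<^sub>q) (gdist D\<^sub>q qsub_alpha \<sigma>\<^sub>q)"
proof (rule quasi_isometricI[where f = qsub_vertex and c = "max 2 (real F)"])
  show "qsub_vertex ` verts D \<sigma> \<subseteq> verts D\<^sub>q \<sigma>\<^sub>q"
    unfolding verts_def by (auto simp flip: qsub_vorb_vertex)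
  fix u v assume uv: "u \<in> verts D \<sigma>" "v \<in> verts D \<sigma>"
  let ?g = "gdist D \<alpha> \<sigma> u v" and ?h = "gdist D\<^sub>q qsub_alpha \<sigma>\<^sub>q (qsub_vertex u) (qsub_vertex v)"
  have g: "0 \<le> ?g" and h: "0 \<le> ?h" by (simp_all add: gdist_def)
  then show "0 \<le> ?g" by simp
  have "2 * ?g \<le> max 2 (real F) * ?g" using g by (intro mult_right_mono) simp_all
  then show "?h \<le> max 2 (real F) * ?g" using qsub_gdist_le[OF conn uv] by linarith
  have "real F * (?h + 1) \<le> max 2 (real F) * (?h + 1)" using h by (intro mult_right_mono) simp_all
  then show "?g \<le> max 2 (real F) * (?h + 1)"
    using gdist_le_qsub_gdist[OF F qsub_connected[OF conn] uv] by linarith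
qed (auto intro: qsub_vertices_near_lift)

end

section \<open>Relabelling darts\<close>

lemma funpow_commute_on:
  assumes "\<And>x. x \<in> X \<Longrightarrow> f x \<in> X" "\<And>x. x \<in> X \<Longrightarrow> h (f x) = g (h x)" "x \<in> X"
  shows "(f ^^ n) x \<in> X \<and> (g ^^ n) (h x) = h ((f ^^ n) x)"
  by (induction n) (simp_all add: assms)

locale cmap_iso =
  fixes X :: "'a set" and a s :: "'a \<Rightarrow> 'a" and Y :: "'b set" and a' s' :: "'b \<Rightarrow> 'b"
    and h :: "'a \<Rightarrow> 'b"
  assumes bij: "bij_betw h X Y"
    and h_alpha: "x \<in> X \<Longrightarrow> h (a x) = a' (h x)"
    and h_sigma: "x \<in> X \<Longrightarrow> h (s x) = s' (h x)"
    and alpha_closed: "x \<in> X \<Longrightarrow> a x \<in> X"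
    and sigma_closed: "x \<in> X \<Longrightarrow> s x \<in> X"
begin

lemma inj: "inj_on h X" and image: "h ` X = Y"
  using bij by (simp_all add: bij_betw_def)

lemma inverse: "cmap_iso Y a' s' X a s (inv_into X h)"
proof
  show "bij_betw (inv_into X h) Y X" using bij_betw_inv_into[OF bij] .
  fix y assume "y \<in> Y"
  then obtain x where x: "x \<in> X" "y = h x" using image by blast
  have ax: "a x \<in> X" "a' y = h (a x)" and sx: "s x \<in> X" "s' y = h (s x)"
    using x alpha_closed sigma_closed h_alpha h_sigma by simp_all
  show "inv_into X h (a' y) = a (inv_into X h y)" "inv_into X h (s' y) = s (inv_into X h y)"
    using inv_into_f_f[OF inj] x ax sx by simp_all
  show "a' y \<in> Y" "s' y \<in> Y" using ax sx image by blast+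
qed

lemma phi_closed: "x \<in> X \<Longrightarrow> fphi a s x \<in> X"
  and h_phi: "x \<in> X \<Longrightarrow> h (fphi a s x) = fphi a' s' (h x)"
  by (simp_all add: fphi_def alpha_closed sigma_closed h_alpha h_sigma)

lemma sigma_pow: "x \<in> X \<Longrightarrow> (s ^^ n) x \<in> X \<and> (s' ^^ n) (h x) = h ((s ^^ n) x)"
  using funpow_commute_on[of X s h s'] sigma_closed h_sigma by blast

lemma phi_pow: "x \<in> X \<Longrightarrow> (fphi a s ^^ n) x \<in> X \<and> (fphi a' s' ^^ n) (h x) = h ((fphi a s ^^ n) x)"
  using funpow_commute_on[of X "fphi a s" h "fphi a' s'"] phi_closed h_phi by blast

lemma vorb_image: "x \<in> X \<Longrightarrow> vorb s' (h x) = h ` vorb s x"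
  and vorb_subset: "x \<in> X \<Longrightarrow> vorb s x \<subseteq> X"
  unfolding vorb_def using sigma_pow by auto

lemma forb_image: "x \<in> X \<Longrightarrow> forb a' s' (h x) = h ` forb a s x"
  and forb_subset: "x \<in> X \<Longrightarrow> forb a s x \<subseteq> X"
  unfolding forb_def using phi_pow by auto

lemma vdeg_eq: "x \<in> X \<Longrightarrow> vdeg s' (h x) = vdeg s x"
  unfolding vdeg_def using vorb_image vorb_subset inj by (metis card_image inj_on_subset)

lemma fdeg_eq: "x \<in> X \<Longrightarrow> fdeg a' s' (h x) = fdeg a s x"
  unfolding fdeg_def using forb_image forb_subset inj by (metis card_image inj_on_subset)

lemma facewalk_map: "x \<in> X \<Longrightarrow> facewalk a' s' (h x) = map h (facewalk a s x)"
  unfolding facewalk_def using fdeg_eq phi_pow by simp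

lemma verts_image: "verts Y s' = (\<lambda>U. h ` U) ` verts X s"
  unfolding verts_def using vorb_image image by auto

lemma verts_subset: "U \<in> verts X s \<Longrightarrow> U \<subseteq> X"
  unfolding verts_def using vorb_subset by blast

lemma is_walk_map: "is_walk X a s u w v \<Longrightarrow> is_walk Y a' s' (h ` u) (map h w) (h ` v)"
proof (induction w arbitrary: u)
  case (Cons d w)
  then have d: "d \<in> X" "u = vorb s d" "is_walk Y a' s' (h ` vorb s (a d)) (map h w) (h ` v)" by auto
  have "h d \<in> Y" using d(1) image by blast
  moreover have "vorb s' (h d) = h ` u" using vorb_image[OF d(1)] d(2) by simp
  moreover have "vorb s' (a' (h d)) = h ` vorb s (a d)"
    using h_alpha[OF d(1)] vorb_image[OF alpha_closed[OF d(1)]] by simp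
  ultimately show ?case using d(3) by simp
qed simp

lemma hstep_map:
  assumes "hstep X a s w w'"
  shows "hstep Y a' s' (map h w) (map h w')"
proof -
  obtain xs ys d where d: "d \<in> X" "w = xs @ ys"
    "w' = xs @ [d, a d] @ ys \<or> w' = xs @ facewalk a s d @ ys"
    using assms unfolding hstep_def by blast
  then have "map h w' = map h xs @ [h d, a' (h d)] @ map h ys \<or>
      map h w' = map h xs @ facewalk a' s' (h d) @ map h ys"
    by (auto simp: h_alpha facewalk_map)
  moreover have "h d \<in> Y" "map h w = map h xs @ map h ys" using d image by auto
  ultimately show ?thesis unfolding hstep_def by blast
qed

lemma homotopic_map:
  "homotopic X a s u v w w' \<Longrightarrow> homotopic Y a' s' (h ` u) (h ` v) (map h w) (map h w')"
  unfolding homotopic_def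
proof (induction rule: rtrancl_induct)
  case (step w' w'')
  then have "(map h w', map h w'') \<in> walk_homot_rel Y a' s' (h ` u) (h ` v)"
    unfolding walk_homot_rel_def using is_walk_map hstep_map by blast
  with step.IH show ?case by simp
qed simp

lemma is_walk_map_back:
  assumes "U \<subseteq> X" "V \<subseteq> X" "is_walk Y a' s' (h ` U) w (h ` V)"
  obtains w\<^sub>0 where "is_walk X a s U w\<^sub>0 V" "w = map h w\<^sub>0"
proof -
  interpret inv: cmap_iso Y a' s' X a s "inv_into X h" by (rule inverse)
  have "is_walk X a s (inv_into X h ` h ` U) (map (inv_into X h) w) (inv_into X h ` h ` V)"
    using inv.is_walk_map[OF assms(3)] .
  moreover have "map h (map (inv_into X h) w) = w"
    using is_walk_darts[OF assms(3)] image by (induction w) (auto simp: f_inv_into_f)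
  ultimately show ?thesis using that assms(1,2) inj by (simp add: inv_into_image_cancel)
qed

lemma gdist_image:
  assumes "U \<subseteq> X" "V \<subseteq> X"
  shows "gdist Y a' s' (h ` U) (h ` V) = gdist X a s U V"
proof -
  have "(\<exists>w. is_walk Y a' s' (h ` U) w (h ` V) \<and> length w = n) \<longleftrightarrow>
        (\<exists>w. is_walk X a s U w V \<and> length w = n)" for n
    using is_walk_map is_walk_map_back[OF assms] by (metis length_map)
  then show ?thesis unfolding gdist_def by simp
qed

lemma is_cmap_image:
  assumes cmap: "is_cmap X a s"
  shows "is_cmap Y a' s'"
  unfolding is_cmap_def
proof (intro conjI ballI)
  fix y assume "y \<in> Y"
  then obtain x where x: "x \<in> X" "y = h x" using image by blast
  have ax: "a x \<in> X" "a (a x) = x" "a x \<noteq> x" using cmap x(1) unfolding is_cmap_def by blast+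
  have a'y: "a' y = h (a x)" using h_alpha x by simp
  show "a' y \<in> Y" using a'y ax(1) image by blast
  show "a' (a' y) = y" using a'y h_alpha[OF ax(1)] ax(2) x(2) by simp
  show "a' y \<noteq> y" using a'y x ax(1,3) inj by (metis inj_onD)
next
  have s: "bij_betw s X X" using cmap unfolding is_cmap_def by blast
  have "inj_on s' Y"
  proof (rule inj_onI)
    fix y\<^sub>1 y\<^sub>2 assume y: "y\<^sub>1 \<in> Y" "y\<^sub>2 \<in> Y" "s' y\<^sub>1 = s' y\<^sub>2"
    then obtain x\<^sub>1 x\<^sub>2 where x: "x\<^sub>1 \<in> X" "x\<^sub>2 \<in> X" "y\<^sub>1 = h x\<^sub>1" "y\<^sub>2 = h x\<^sub>2" using image by blast
    with y(3) have "h (s x\<^sub>1) = h (s x\<^sub>2)" by (simp add: h_sigma)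
    then have "s x\<^sub>1 = s x\<^sub>2" using inj x sigma_closed by (meson inj_onD)
    then show "y\<^sub>1 = y\<^sub>2" using bij_betw_imp_inj_on[OF s] x by (metis inj_onD)
  qed
  moreover have "s' ` Y = h ` s ` X"
    unfolding image[symmetric] image_image by (rule image_cong) (simp_all add: h_sigma)
  ultimately show "bij_betw s' Y Y"
    using bij_betw_imp_surj_on[OF s] image unfolding bij_betw_def by simp
qed

lemma simply_connected_map_image:
  assumes "simply_connected_map X a s"
  shows "simply_connected_map Y a' s'"
  unfolding simply_connected_map_iff verts_image
proof (intro ballI allI impI)
  fix U' w assume "U' \<in> (\<lambda>U. h ` U) ` verts X s" and w: "is_walk Y a' s' U' w U'"
  then obtain U where U: "U \<in> verts X s" "U' = h ` U" by blast
  with w obtain w\<^sub>0 where w\<^sub>0: "is_walk X a s U w\<^sub>0 U" "w = map h w\<^sub>0"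
    using is_walk_map_back verts_subset by metis
  with U assms have "homotopic X a s U U w\<^sub>0 []"
    unfolding simply_connected_map_iff by blast
  then show "homotopic Y a' s' U' U' w []" using homotopic_map U(2) w\<^sub>0(2) by fastforce
qed

lemma proper_map_image:
  assumes "proper_map X a s"
  shows "proper_map Y a' s'"
  unfolding proper_map_def
proof (intro conjI ballI)
  show "is_cmap Y a' s'" "simply_connected_map Y a' s'"
    using assms is_cmap_image simply_connected_map_image unfolding proper_map_def by blast+
  show "infinite Y" using assms inj image finite_imageD unfolding proper_map_def by blast
  show "connected_map Y a' s'"
    using assms is_walk_map unfolding proper_map_def connected_map_def verts_image by blast
  fix y assume "y \<in> Y"
  then obtain x where "x \<in> X" "y = h x" using image by blast
  then show "finite (vorb s' y)" "finite (forb a' s' y)"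
    using assms vorb_image forb_image unfolding proper_map_def by auto
qed

lemma quasi_isometric_image:
  assumes "quasi_isometric Z dZ (verts X s) (gdist X a s)"
  shows "quasi_isometric Z dZ (verts Y s') (gdist Y a' s')"
proof -
  obtain f L K C where f: "f ` Z \<subseteq> verts X s" "L > 1" "K > 0"
    "\<forall>x\<in>Z. \<forall>y\<in>Z. - K + dZ x y / L < gdist X a s (f x) (f y) \<and> gdist X a s (f x) (f y) < K + L * dZ x y"
    "\<forall>u\<in>verts X s. \<exists>x\<in>Z. gdist X a s u (f x) \<le> C"
    using assms unfolding quasi_isometric_def by blast
  have gd: "gdist Y a' s' (h ` U) (h ` V) = gdist X a s U V" if "U \<in> verts X s" "V \<in> verts X s" for U V
    using gdist_image[OF verts_subset[OF that(1)] verts_subset[OF that(2)]] .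
  show ?thesis unfolding quasi_isometric_def
  proof (intro exI conjI ballI)
    show "(\<lambda>x. h ` f x) ` Z \<subseteq> verts Y s'" using f(1) unfolding verts_image by blast
    show "L > 1" "K > 0" using f(2,3) .
    fix x y assume xy: "x \<in> Z" "y \<in> Z"
    then have "f x \<in> verts X s" "f y \<in> verts X s" using f(1) by blast+
    then show "- K + dZ x y / L < gdist Y a' s' (h ` f x) (h ` f y)"
      "gdist Y a' s' (h ` f x) (h ` f y) < K + L * dZ x y"
      using f(4) xy gd by simp_all
  next
    fix z assume "z \<in> verts Y s'"
    then obtain u where u: "u \<in> verts X s" "z = h ` u" unfolding verts_image by blast
    then obtain x where x: "x \<in> Z" "gdist X a s u (f x) \<le> C" using f(5) by blast
    then have "gdist Y a' s' z (h ` f x) = gdist X a s u (f x)" using gd u f(1) by blast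
    with x show "\<exists>x\<in>Z. gdist Y a' s' z (h ` f x) \<le> C" by (intro bexI[of _ x]) simp_all
  qed
qed

lemma nonflat_vertices_image: "nonflat_vertices Y s' \<subseteq> (\<lambda>U. h ` U) ` nonflat_vertices X s"
proof
  fix U assume "U \<in> nonflat_vertices Y s'"
  then obtain x where "x \<in> X" "U = vorb s' (h x)" "vdeg s' (h x) \<noteq> 4"
    using image unfolding nonflat_vertices_def by blast
  then show "U \<in> (\<lambda>U. h ` U) ` nonflat_vertices X s"
    using vorb_image vdeg_eq unfolding nonflat_vertices_def by auto
qed

end

lemma countable_cmap_iso_nat:
  assumes "countable X" "\<And>x. x \<in> X \<Longrightarrow> a x \<in> X" "\<And>x. x \<in> X \<Longrightarrow> s x \<in> X"
  obtains Y :: "nat set" and a' s' h where "cmap_iso X a s Y a' s' h"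
proof
  let ?h = "to_nat_on X"
  have inj: "inj_on ?h X" using assms(1) by (rule inj_on_to_nat_on)
  show "cmap_iso X a s (?h ` X) (\<lambda>n. ?h (a (inv_into X ?h n))) (\<lambda>n. ?h (s (inv_into X ?h n))) ?h"
    using assms inj by unfold_locales (simp_all add: inj_on_imp_bij_betw)
qed

definition dart_word :: "('d \<Rightarrow> 'd) \<Rightarrow> ('d \<Rightarrow> 'd) \<Rightarrow> 'd \<Rightarrow> bool list \<Rightarrow> 'd" where
  "dart_word \<alpha> \<sigma> d\<^sub>0 bs = foldr (\<lambda>b d. if b then \<sigma> d else \<alpha> d) bs d\<^sub>0"

lemma vorb_dart_word: "vorb \<sigma> (dart_word \<alpha> \<sigma> d\<^sub>0 bs) \<subseteq> range (dart_word \<alpha> \<sigma> d\<^sub>0)"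
proof -
  have "(\<sigma> ^^ n) (dart_word \<alpha> \<sigma> d\<^sub>0 bs) = dart_word \<alpha> \<sigma> d\<^sub>0 (replicate n True @ bs)" for n
    by (induction n) (simp_all add: dart_word_def)
  then show ?thesis unfolding vorb_def by auto
qed

lemma countable_darts:
  assumes conn: "connected_map D \<alpha> \<sigma>" and d\<^sub>0: "d\<^sub>0 \<in> D"
  shows "countable D"
proof -
  have reach: "vorb \<sigma> d \<subseteq> range (dart_word \<alpha> \<sigma> d\<^sub>0)"
    if "is_walk D \<alpha> \<sigma> (vorb \<sigma> (dart_word \<alpha> \<sigma> d\<^sub>0 bs)) w (vorb \<sigma> d)" for w bs d
    using that
  proof (induction w arbitrary: bs)
    case Nil
    then show ?case using vorb_dart_word[of \<sigma> \<alpha> d\<^sub>0 bs] by simp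
  next
    case (Cons e w)
    then have "e \<in> vorb \<sigma> (dart_word \<alpha> \<sigma> d\<^sub>0 bs)" using vorb_self[of e \<sigma>] by simp
    then have "e \<in> range (dart_word \<alpha> \<sigma> d\<^sub>0)" using vorb_dart_word[of \<sigma> \<alpha> d\<^sub>0 bs] by blast
    then obtain cs where "e = dart_word \<alpha> \<sigma> d\<^sub>0 cs" by blast
    then have "\<alpha> e = dart_word \<alpha> \<sigma> d\<^sub>0 (False # cs)" by (simp add: dart_word_def)
    then show ?case using Cons.IH[of "False # cs"] Cons.prems by simp
  qed
  have "D \<subseteq> range (dart_word \<alpha> \<sigma> d\<^sub>0)"
  proof
    fix d assume "d \<in> D"
    then obtain w where "is_walk D \<alpha> \<sigma> (vorb \<sigma> d\<^sub>0) w (vorb \<sigma> d)"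
      using conn d\<^sub>0 unfolding connected_map_def verts_def by blast
    moreover have "dart_word \<alpha> \<sigma> d\<^sub>0 [] = d\<^sub>0" by (simp add: dart_word_def)
    ultimately have "vorb \<sigma> d \<subseteq> range (dart_word \<alpha> \<sigma> d\<^sub>0)" using reach[where w = w and bs = "[]" and d = d] by simp
    then show "d \<in> range (dart_word \<alpha> \<sigma> d\<^sub>0)" using vorb_self[of d \<sigma>] by blast
  qed
  then show ?thesis by (rule countable_subset) simp
qed

lemma (in locally_finite_cmap) countable_qsub_darts:
  assumes "proper_map D \<alpha> \<sigma>"
  shows "countable D\<^sub>q"
proof -
  have "D \<noteq> {}" using assms infinite_imp_nonempty unfolding proper_map_def by blast
  then obtain d where "(d, VM) \<in> D\<^sub>q" by auto
  with qsub_connected show ?thesis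
    using assms unfolding proper_map_def by (blast intro: countable_darts)
qed

theorem lemma3p3:
  fixes D :: "'d set" and \<alpha> \<sigma> :: "'d \<Rightarrow> 'd"
  assumes "proper_map D \<alpha> \<sigma>"
    and "four_four_map D \<alpha> \<sigma>"
    and "finite (nonflat_faces D \<alpha> \<sigma>)"
    and "finite (nonflat_vertices D \<sigma>)"
  shows "\<exists>(D' :: nat set) \<alpha>' \<sigma>'. proper_map D' \<alpha>' \<sigma>' \<and>
           (\<forall>d\<in>D'. fdeg \<alpha>' \<sigma>' d = 4) \<and>
           finite (nonflat_vertices D' \<sigma>') \<and>
           quasi_isometric (verts D \<sigma>) (gdist D \<alpha> \<sigma>) (verts D' \<sigma>') (gdist D' \<alpha>' \<sigma>')"
proof -
  interpret locally_finite_cmap D \<alpha> \<sigma> using assms(1) by (rule proper_map_locally_finite)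
  obtain F where F: "\<forall>d\<in>D. fdeg \<alpha> \<sigma> d \<le> F" using fdeg_bounded[OF assms(3)] .
  have conn: "connected_map D \<alpha> \<sigma>" using assms(1) unfolding proper_map_def by blast
  obtain Y :: "nat set" and \<alpha>' \<sigma>' h where "cmap_iso D\<^sub>q qsub_alpha \<sigma>\<^sub>q Y \<alpha>' \<sigma>' h"
    by (rule countable_cmap_iso_nat[OF countable_qsub_darts[OF assms(1)] qsub.alpha_in qsub.sigma_in])
  then interpret relabel: cmap_iso D\<^sub>q qsub_alpha \<sigma>\<^sub>q Y \<alpha>' \<sigma>' h .
  have "proper_map Y \<alpha>' \<sigma>'" using relabel.proper_map_image[OF qsub_proper_map[OF assms(1)]] .
  moreover have "\<forall>y\<in>Y. fdeg \<alpha>' \<sigma>' y = 4"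
    using relabel.fdeg_eq qsub_fdeg unfolding relabel.image[symmetric] by simp
  moreover have "finite (nonflat_vertices D\<^sub>q \<sigma>\<^sub>q)"
    by (rule finite_subset[OF qsub_nonflat_vertices]) (simp add: assms(3,4))
  then have "finite (nonflat_vertices Y \<sigma>')"
    by (rule finite_subset[OF relabel.nonflat_vertices_image finite_imageI])
  moreover have "quasi_isometric (verts D \<sigma>) (gdist D \<alpha> \<sigma>) (verts Y \<sigma>') (gdist Y \<alpha>' \<sigma>')"
    using relabel.quasi_isometric_image[OF qsub_quasi_isometric[OF F conn]] .
  ultimately show ?thesis by blast
qed

end
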